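(* Let $p\in(1,\infty)$, $\alpha\in(0,\frac np]$ and $f\in C^p_\alpha(\mathbb{R}^n)$. If $s>n-\alpha p$ and $\mu\in\mathcal{M}^s(\mathbb{R}^n)$, then $\|Mf\|_{L^1(\mu)}\le C\|f\|_{C^p_\alpha(\mathbb{R}^n)}$, where $C$ does not depend on $f$ (it may depend on $n,p,\alpha,s$ and $c_s(\mu)$).
   Context: $Mf$ is the centred Hardy–Littlewood maximal function on $\mathbb{R}^n$, defined at every point. For $\alpha>0$, $k=\lfloor\alpha\rfloor$, and a ball $\Delta$, $P^k_\Delta f$ is the unique polynomial of degree $\le k$ with $\int_\Delta(f-P^k_\Delta f)(y)y^\gamma dy=0$ for all multi-indices $|\gamma|\le k$; $f^\sharp_\alpha(x)=\sup_{\Delta\ni x}|\Delta|^{-\alpha/n}\frac1{|\Delta|}\int_\Delta|f-P^k_\Delta f|$ (supremum over balls containing $x$); $C^p_\alpha(\mathbb{R}^n)=\{f\in L^p:f^\sharp_\alpha\in L^p\}$ with norm $\|f\|_{L^p}+\|f^\sharp_\alpha\|_{L^p}$. $\mathcal{M}^s(\mathbb{R}^n)$ is the set of Borel probability measures $\mu$ with $c_s(\mu)=\sup_{x,r>0}\mu(\Delta(x,r))/r^s<\infty$. *)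

theory Defs
  imports "HOL-Probability.Probability"
begin

definition multi_idx :: "nat \<Rightarrow> ('a::euclidean_space \<Rightarrow> nat) set" where
  "multi_idx k = {\<gamma>. (\<forall>b. b \<notin> Basis \<longrightarrow> \<gamma> b = 0) \<and> (\<Sum>b\<in>Basis. \<gamma> b) \<le> k}"

definition monom :: "('a::euclidean_space \<Rightarrow> nat) \<Rightarrow> 'a \<Rightarrow> real" where
  "monom \<gamma> x = (\<Prod>b\<in>Basis. (x \<bullet> b) ^ \<gamma> b)"

definition polys :: "nat \<Rightarrow> ('a::euclidean_space \<Rightarrow> real) set" where
  "polys k = {P. \<exists>c. \<forall>x. P x = (\<Sum>\<gamma>\<in>multi_idx k. c \<gamma> * monom \<gamma> x)}"

definition poly_proj :: "nat \<Rightarrow> 'a::euclidean_space set \<Rightarrow> ('a \<Rightarrow> real) \<Rightarrow> ('a \<Rightarrow> real)" where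
  "poly_proj k D f = (THE P. P \<in> polys k \<and>
      (\<forall>\<gamma>\<in>multi_idx k. (LINT y:D|lebesgue. (f y - P y) * monom \<gamma> y) = 0))"

definition sharp_max :: "real \<Rightarrow> ('a::euclidean_space \<Rightarrow> real) \<Rightarrow> 'a \<Rightarrow> ennreal" where
  "sharp_max \<alpha> f x = (SUP cr \<in> {(c, r). 0 < r \<and> x \<in> ball c r}.
      ennreal (measure lebesgue (ball (fst cr) (snd cr)) powr (- \<alpha> / real DIM('a))
               / measure lebesgue (ball (fst cr) (snd cr)))
      * (\<integral>\<^sup>+ y \<in> ball (fst cr) (snd cr).
           ennreal \<bar>f y - poly_proj (nat \<lfloor>\<alpha>\<rfloor>) (ball (fst cr) (snd cr)) f y\<bar> \<partial>lebesgue))"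

definition maximal :: "('a::euclidean_space \<Rightarrow> real) \<Rightarrow> 'a \<Rightarrow> ennreal" where
  "maximal f x = (SUP r \<in> {0<..}. (\<integral>\<^sup>+ y \<in> ball x r. ennreal \<bar>f y\<bar> \<partial>lebesgue)
                                    / emeasure lebesgue (ball x r))"

definition in_Lp :: "real \<Rightarrow> ('a::euclidean_space \<Rightarrow> real) \<Rightarrow> bool" where
  "in_Lp p f \<longleftrightarrow> f \<in> borel_measurable lebesgue \<and> integrable lebesgue (\<lambda>x. \<bar>f x\<bar> powr p)"

definition Lp_norm :: "real \<Rightarrow> ('a::euclidean_space \<Rightarrow> real) \<Rightarrow> real" where
  "Lp_norm p f = (\<integral>x. \<bar>f x\<bar> powr p \<partial>lebesgue) powr (1 / p)"

definition in_Lp_enn :: "real \<Rightarrow> ('a::euclidean_space \<Rightarrow> ennreal) \<Rightarrow> bool" where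
  "in_Lp_enn p g \<longleftrightarrow> (AE x in lebesgue. g x < \<infinity>) \<and> in_Lp p (\<lambda>x. enn2real (g x))"

definition in_Cp :: "real \<Rightarrow> real \<Rightarrow> ('a::euclidean_space \<Rightarrow> real) \<Rightarrow> bool" where
  "in_Cp p \<alpha> f \<longleftrightarrow> in_Lp p f \<and> in_Lp_enn p (sharp_max \<alpha> f)"

definition Cp_norm :: "real \<Rightarrow> real \<Rightarrow> ('a::euclidean_space \<Rightarrow> real) \<Rightarrow> real" where
  "Cp_norm p \<alpha> f = Lp_norm p f + Lp_norm p (\<lambda>x. enn2real (sharp_max \<alpha> f x))"

definition cs :: "real \<Rightarrow> 'a::euclidean_space measure \<Rightarrow> ennreal" where
  "cs s \<mu> = (SUP xr \<in> UNIV \<times> {0<..}. emeasure \<mu> (ball (fst xr) (snd xr)) / ennreal (snd xr powr s))"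

definition Ms :: "real \<Rightarrow> 'a::euclidean_space measure \<Rightarrow> bool" where
  "Ms s \<mu> \<longleftrightarrow> prob_space \<mu> \<and> sets \<mu> = sets borel \<and> cs s \<mu> < \<infinity>"

end

theory Submission
  imports Defs "HOL-Computational_Algebra.Polynomial"
begin

(* Fix x and write B_j = B(x, 2^-j), P_j = P^k_(B_j) f and e_j(x) for the mean of |f - P_j| over B_j.
   Means over balls of radius at least 1 are controlled by the L^p norm of f. For smaller balls we
   telescope P_(j+1) - P_j: polynomials of degree at most k form a finite-dimensional space, so on
   every ball their supremum is at most a fixed multiple of their mean, and the mean of
   |P_(j+1) - P_j| over B_(j+1) is at most e_(j+1) + 2^n e_j. Hence Mf(x) is bounded by a multiple of
   the L^p norm of f plus sum_j e_j(x). Next, e_j(x) <= |B_j|^(alpha/n) f#_alpha(y) for every y in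
   B_j; averaging over y, integrating in mu and swapping the integrals, mu(B(y, 2^-j)) <= c_s(mu)
   2^(-j s) gives int e_j dmu = O(2^(-j beta)) with beta = alpha + (s - n)/p > 0, a convergent
   geometric series. Hoelder's inequality is used in the linearised form
   t <= t^p / (p l^(p-1)) + l, with l chosen optimally. *)

section \<open>Polynomials of bounded degree\<close>

lemma finite_multi_idx: "finite (multi_idx k :: ('a::euclidean_space \<Rightarrow> nat) set)"
proof -
  have "multi_idx k \<subseteq> {\<gamma>::'a\<Rightarrow>nat. \<forall>b. (b \<in> Basis \<longrightarrow> \<gamma> b \<in> {..k}) \<and> (b \<notin> Basis \<longrightarrow> \<gamma> b = 0)}"
  proof
    fix \<gamma> :: "'a \<Rightarrow> nat" assume g: "\<gamma> \<in> multi_idx k"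
    { fix b :: 'a assume b: "b \<in> Basis"
      have "\<gamma> b \<le> (\<Sum>b\<in>Basis. \<gamma> b)" using b by (intro member_le_sum) auto
      also have "\<dots> \<le> k" using g by (simp add: multi_idx_def)
      finally have "\<gamma> b \<in> {..k}" by simp }
    then show "\<gamma> \<in> {\<gamma>::'a\<Rightarrow>nat. \<forall>b. (b \<in> Basis \<longrightarrow> \<gamma> b \<in> {..k}) \<and> (b \<notin> Basis \<longrightarrow> \<gamma> b = 0)}"
      using g by (auto simp: multi_idx_def)
  qed
  moreover have "finite {\<gamma>::'a\<Rightarrow>nat. \<forall>b. (b \<in> Basis \<longrightarrow> \<gamma> b \<in> {..k}) \<and> (b \<notin> Basis \<longrightarrow> \<gamma> b = 0)}"
    by (rule finite_set_of_finite_funs) auto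
  ultimately show ?thesis by (rule finite_subset)
qed

lemma multi_idx_mono: "k \<le> l \<Longrightarrow> multi_idx k \<subseteq> multi_idx l"
  by (auto simp: multi_idx_def)

lemma mem_polys_iff: "P \<in> polys k \<longleftrightarrow> (\<exists>c. P = (\<lambda>x. \<Sum>\<gamma>\<in>multi_idx k. c \<gamma> * Defs.monom \<gamma> x))"
  by (auto simp: polys_def)

lemma polys_mono: assumes "k \<le> l" "P \<in> polys k" shows "P \<in> polys l"
proof -
  obtain c where c: "P = (\<lambda>x. \<Sum>\<gamma>\<in>multi_idx k. c \<gamma> * Defs.monom \<gamma> x)" using assms by (auto simp: mem_polys_iff)
  define d where "d \<gamma> = (if \<gamma> \<in> multi_idx k then c \<gamma> else 0)" for \<gamma>
  have "P x = (\<Sum>\<gamma>\<in>multi_idx l. d \<gamma> * Defs.monom \<gamma> x)" for x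
  proof -
    have "(\<Sum>\<gamma>\<in>multi_idx l. d \<gamma> * Defs.monom \<gamma> x) = (\<Sum>\<gamma>\<in>multi_idx k. d \<gamma> * Defs.monom \<gamma> x)"
      by (rule sum.mono_neutral_right) (use multi_idx_mono[OF assms(1)] finite_multi_idx in \<open>auto simp: d_def\<close>)
    also have "\<dots> = P x" unfolding c d_def by (rule sum.cong) auto
    finally show ?thesis by simp
  qed
  then show ?thesis by (auto simp: polys_def)
qed

lemma polys_add: assumes "P \<in> polys k" "Q \<in> polys k" shows "(\<lambda>x. P x + Q x) \<in> polys k"
proof -
  obtain c d where "P = (\<lambda>x. \<Sum>\<gamma>\<in>multi_idx k. c \<gamma> * Defs.monom \<gamma> x)" "Q = (\<lambda>x. \<Sum>\<gamma>\<in>multi_idx k. d \<gamma> * Defs.monom \<gamma> x)"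
    using assms by (auto simp: mem_polys_iff)
  then show ?thesis unfolding polys_def
    by (auto intro!: exI[of _ "\<lambda>\<gamma>. c \<gamma> + d \<gamma>"] simp: sum.distrib distrib_right)
qed

lemma polys_cmult: assumes "P \<in> polys k" shows "(\<lambda>x. a * P x) \<in> polys k"
proof -
  obtain c where "P = (\<lambda>x. \<Sum>\<gamma>\<in>multi_idx k. c \<gamma> * Defs.monom \<gamma> x)"
    using assms by (auto simp: mem_polys_iff)
  then show ?thesis unfolding polys_def
    by (auto intro!: exI[of _ "\<lambda>\<gamma>. a * c \<gamma>"] simp: sum_distrib_left mult.assoc)
qed

lemma polys_zero: "(\<lambda>x. 0) \<in> polys k"
  unfolding polys_def by (auto intro!: exI[of _ "\<lambda>\<gamma>. 0"])

lemma polys_diff: assumes "P \<in> polys k" "Q \<in> polys k" shows "(\<lambda>x. P x - Q x) \<in> polys k"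
  using polys_add[OF assms(1) polys_cmult[OF assms(2), of "-1"]] by simp

lemma polys_sum: assumes "finite S" "\<And>i. i \<in> S \<Longrightarrow> P i \<in> polys k"
  shows "(\<lambda>x. \<Sum>i\<in>S. P i x) \<in> polys k"
  using assms by (induction S rule: finite_induct) (auto intro: polys_zero polys_add)

lemma polys_monom: assumes "\<gamma> \<in> multi_idx k" shows "Defs.monom \<gamma> \<in> polys k"
proof -
  have "Defs.monom \<gamma> x = (\<Sum>\<delta>\<in>multi_idx k. (if \<delta> = \<gamma> then 1 else 0) * Defs.monom \<delta> x)" for x
  proof -
    have "(\<Sum>\<delta>\<in>multi_idx k. (if \<delta> = \<gamma> then 1 else 0) * Defs.monom \<delta> x)
        = (\<Sum>\<delta>\<in>multi_idx k. if \<delta> = \<gamma> then Defs.monom \<delta> x else 0)" by (rule sum.cong) auto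
    also have "\<dots> = Defs.monom \<gamma> x" using assms by (simp add: sum.delta finite_multi_idx)
    finally show ?thesis by simp
  qed
  then show ?thesis unfolding polys_def mem_Collect_eq
    by (intro exI[where x="\<lambda>\<delta>. if \<delta> = \<gamma> then 1 else 0"] allI) blast
qed

lemma monom_add: "Defs.monom (\<lambda>b. \<gamma> b + \<delta> b) x = Defs.monom \<gamma> x * Defs.monom \<delta> x"
  by (simp add: Defs.monom_def power_add prod.distrib)

lemma multi_idx_add: "\<gamma> \<in> multi_idx a \<Longrightarrow> \<delta> \<in> multi_idx b \<Longrightarrow> (\<lambda>i. \<gamma> i + \<delta> i) \<in> multi_idx (a + b)"
  by (auto simp: multi_idx_def sum.distrib)

lemma polys_mult: assumes "P \<in> polys a" "Q \<in> polys b" shows "(\<lambda>x. P x * Q x) \<in> polys (a + b)"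
proof -
  obtain c d where cd: "P = (\<lambda>x. \<Sum>\<gamma>\<in>multi_idx a. c \<gamma> * Defs.monom \<gamma> x)" "Q = (\<lambda>x. \<Sum>\<gamma>\<in>multi_idx b. d \<gamma> * Defs.monom \<gamma> x)"
    using assms by (auto simp: mem_polys_iff)
  have "(\<lambda>x. P x * Q x) = (\<lambda>x. \<Sum>\<gamma>\<in>multi_idx a. \<Sum>\<delta>\<in>multi_idx b. (c \<gamma> * d \<delta>) * Defs.monom (\<lambda>i. \<gamma> i + \<delta> i) x)"
    unfolding cd monom_add by (simp add: sum_product mult_ac)
  also have "\<dots> \<in> polys (a + b)"
    by (intro polys_sum finite_multi_idx polys_cmult polys_monom multi_idx_add)
  finally show ?thesis .
qed

lemma polys_const: "(\<lambda>x. a) \<in> polys k"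
proof -
  have "(\<lambda>_. 0) \<in> multi_idx k" by (simp add: multi_idx_def)
  from polys_cmult[OF polys_monom[OF this], of a] show ?thesis by (simp add: Defs.monom_def)
qed

lemma polys_coord: assumes "b \<in> Basis" shows "(\<lambda>x. x \<bullet> b) \<in> polys 1"
proof -
  define \<gamma> where "\<gamma> = (\<lambda>i. if i = b then 1 else 0::nat)"
  have "\<gamma> \<in> multi_idx 1" using assms by (simp add: multi_idx_def \<gamma>_def)
  moreover have "Defs.monom \<gamma> = (\<lambda>x. x \<bullet> b)"
    using assms by (auto simp: Defs.monom_def \<gamma>_def if_distrib prod.delta cong: if_cong)
  ultimately show ?thesis using polys_monom by metis
qed

lemma polys_affine_coord: assumes "b \<in> Basis" shows "(\<lambda>x. a + r * (x \<bullet> b)) \<in> polys 1"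
  using polys_add[OF polys_const polys_cmult[OF polys_coord[OF assms]]] .

lemma polys_power: assumes "P \<in> polys 1" shows "(\<lambda>x. P x ^ m) \<in> polys m"
proof (induction m)
  case 0 then show ?case using polys_const by simp
next
  case (Suc m) then show ?case using polys_mult[OF assms Suc] by simp
qed

lemma polys_prod_basis:
  assumes "S \<subseteq> Basis" "\<And>b. b \<in> Basis \<Longrightarrow> h b \<in> polys 1"
  shows "(\<lambda>z. \<Prod>b\<in>S. h b z ^ \<gamma> b) \<in> polys (\<Sum>b\<in>S. \<gamma> b)"
proof -
  have "finite S" by (rule finite_subset[OF assms(1)]) simp
  then show ?thesis using assms(1)
  proof (induction S rule: finite_induct)
    case empty then show ?case using polys_const by simp
  next
    case (insert b S)
    then show ?case using polys_mult[OF polys_power[OF assms(2)] insert.IH, of b "\<gamma> b"] by simp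
  qed
qed

lemma polys_compose_affine: assumes "P \<in> polys k" shows "(\<lambda>z. P (c + r *\<^sub>R z)) \<in> polys k"
proof -
  obtain d where d: "P = (\<lambda>x. \<Sum>\<gamma>\<in>multi_idx k. d \<gamma> * Defs.monom \<gamma> x)" using assms by (auto simp: mem_polys_iff)
  have "(\<lambda>z. P (c + r *\<^sub>R z)) = (\<lambda>z. \<Sum>\<gamma>\<in>multi_idx k. d \<gamma> * (\<Prod>b\<in>Basis. (c \<bullet> b + r * (z \<bullet> b)) ^ \<gamma> b))"
    by (simp add: d Defs.monom_def inner_add_left)
  also have "\<dots> \<in> polys k"
  proof (intro polys_sum finite_multi_idx polys_cmult)
    fix \<gamma> :: "'a \<Rightarrow> nat" assume g: "\<gamma> \<in> multi_idx k"
    have "(\<lambda>z. \<Prod>b\<in>Basis. (c \<bullet> b + r * (z \<bullet> b)) ^ \<gamma> b) \<in> polys (\<Sum>b\<in>Basis. \<gamma> b)"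
      by (rule polys_prod_basis, simp, erule polys_affine_coord)
    then show "(\<lambda>z. \<Prod>b\<in>Basis. (c \<bullet> b + r * (z \<bullet> b)) ^ \<gamma> b) \<in> polys k"
      by (rule polys_mono[rotated]) (use g in \<open>simp add: multi_idx_def\<close>)
  qed
  finally show ?thesis .
qed

lemma continuous_on_polys: assumes "P \<in> polys k" shows "continuous_on S P"
proof -
  obtain d where d: "P = (\<lambda>x. \<Sum>\<gamma>\<in>multi_idx k. d \<gamma> * Defs.monom \<gamma> x)" using assms by (auto simp: mem_polys_iff)
  show ?thesis unfolding d Defs.monom_def by (intro continuous_intros)
qed

lemma borel_measurable_polys: assumes "P \<in> polys k" shows "P \<in> borel_measurable borel"
  using continuous_on_polys[OF assms] by (rule borel_measurable_continuous_onI)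

lemma polys_along_line: assumes "P \<in> polys k" shows "\<exists>q::real poly. \<forall>t. P (c + t *\<^sub>R v) = poly q t"
proof -
  obtain d where d: "P = (\<lambda>x. \<Sum>\<gamma>\<in>multi_idx k. d \<gamma> * Defs.monom \<gamma> x)" using assms by (auto simp: mem_polys_iff)
  define q where "q = (\<Sum>\<gamma>\<in>multi_idx k. smult (d \<gamma>) (\<Prod>b\<in>Basis. [:c \<bullet> b, v \<bullet> b:] ^ \<gamma> b))"
  have "P (c + t *\<^sub>R v) = poly q t" for t
    by (simp add: d q_def Defs.monom_def poly_sum poly_prod inner_add_left mult_ac)
  then show ?thesis by blast
qed

lemma polys_eq_0_if_vanishes_on_ball:
  assumes "P \<in> polys k" "r > 0" "\<And>y. y \<in> ball c r \<Longrightarrow> P y = 0"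
  shows "P x = 0"
proof -
  obtain q where q: "\<And>t. P (c + t *\<^sub>R (x - c)) = poly q t" using polys_along_line[OF assms(1)] by blast
  define \<delta> where "\<delta> = r / (norm (x - c) + 1)"
  have "norm (x - c) + 1 > 0" by (smt (verit) norm_ge_zero)
  then have \<delta>: "\<delta> > 0" using assms(2) unfolding \<delta>_def by (rule divide_pos_pos[rotated])
  have "{0<..<\<delta>} \<subseteq> {t. poly q t = 0}"
  proof
    fix t assume t: "t \<in> {0<..<\<delta>}"
    have "norm (t *\<^sub>R (x - c)) = t * norm (x - c)" using t by simp
    also have "\<dots> \<le> \<delta> * norm (x - c)" using t by (intro mult_right_mono) auto
    also have "\<dots> < r" unfolding \<delta>_def using assms(2) \<open>norm (x - c) + 1 > 0\<close>
      by (simp add: pos_divide_less_eq)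
    finally have "c + t *\<^sub>R (x - c) \<in> ball c r" by (simp add: dist_norm)
    then show "t \<in> {t. poly q t = 0}" using assms(3) q by (metis mem_Collect_eq)
  qed
  moreover have "infinite {0<..<\<delta>}" using \<delta> by simp
  ultimately have "q = 0" using poly_roots_finite finite_subset by blast
  then show ?thesis using q[of 1] by simp
qed

section \<open>Orthonormal expansions\<close>

definition L2_inner :: "'a measure \<Rightarrow> ('a \<Rightarrow> real) \<Rightarrow> ('a \<Rightarrow> real) \<Rightarrow> real" where
  "L2_inner M u v = (\<integral>x. u x * v x \<partial>M)"

definition orthonormal_on :: "'a measure \<Rightarrow> ('a \<Rightarrow> real) set \<Rightarrow> bool" where
  "orthonormal_on M E \<longleftrightarrow> (\<forall>e\<in>E. \<forall>e'\<in>E. L2_inner M e e' = (if e = e' then 1 else 0))"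

definition expands_in :: "'a measure \<Rightarrow> ('a \<Rightarrow> real) set \<Rightarrow> ('a \<Rightarrow> real) \<Rightarrow> bool" where
  "expands_in M E u \<longleftrightarrow> (\<forall>x\<in>space M. u x = (\<Sum>e\<in>E. L2_inner M u e * e x))"

lemma L2_inner_commute: "L2_inner M u v = L2_inner M v u"
  unfolding L2_inner_def by (simp add: mult.commute)

lemma L2_inner_cong: "(\<And>x. x \<in> space M \<Longrightarrow> u x = u' x) \<Longrightarrow> L2_inner M u w = L2_inner M u' w"
  unfolding L2_inner_def by (intro Bochner_Integration.integral_cong) auto

lemma L2_inner_divide_left: "L2_inner M (\<lambda>x. u x / c) w = L2_inner M u w / c"
  unfolding L2_inner_def by simp

lemma L2_inner_self_nonneg: "L2_inner M u u \<ge> 0"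
  unfolding L2_inner_def by (intro integral_nonneg_AE) auto

text \<open>Stands in for a finite-dimensional function space: no basis is assumed, Gram--Schmidt
  produces orthonormal systems expanding any finite family.\<close>
locale bounded_L2_space =
  fixes M :: "'a measure" and V :: "('a \<Rightarrow> real) set"
  assumes finite_measure: "finite_measure M"
    and zero_mem: "(\<lambda>x. 0) \<in> V"
    and lincomb_mem: "\<And>u v a b. u \<in> V \<Longrightarrow> v \<in> V \<Longrightarrow> (\<lambda>x. a * u x + b * v x) \<in> V"
    and measurable_mem: "\<And>u. u \<in> V \<Longrightarrow> u \<in> borel_measurable M"
    and bounded_mem: "\<And>u. u \<in> V \<Longrightarrow> \<exists>K. \<forall>x\<in>space M. \<bar>u x\<bar> \<le> K"
    and L2_inner_self_eq_0: "\<And>u. u \<in> V \<Longrightarrow> L2_inner M u u = 0 \<Longrightarrow> \<forall>x\<in>space M. u x = 0"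
begin

lemma sum_mem: "finite S \<Longrightarrow> (\<And>i. i \<in> S \<Longrightarrow> g i \<in> V) \<Longrightarrow> (\<lambda>x. \<Sum>i\<in>S. a i * g i x) \<in> V"
proof (induction S rule: finite_induct)
  case empty then show ?case using zero_mem by simp
next
  case (insert j S)
  have "(\<lambda>x. a j * g j x + 1 * (\<Sum>i\<in>S. a i * g i x)) \<in> V"
    using insert by (intro lincomb_mem) auto
  then show ?case using insert by simp
qed

lemma integrable_mult_mem:
  assumes "integrable M f" "f \<in> borel_measurable M" "v \<in> V"
  shows "integrable M (\<lambda>x. f x * v x)"
proof -
  obtain K where K: "\<forall>x\<in>space M. \<bar>v x\<bar> \<le> K" using bounded_mem[OF assms(3)] by blast
  show ?thesis
  proof (rule Bochner_Integration.integrable_bound[of _ "\<lambda>x. K * f x"])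
    show "integrable M (\<lambda>x. K * f x)" using assms(1) by simp
    show "(\<lambda>x. f x * v x) \<in> borel_measurable M" using assms(2) measurable_mem[OF assms(3)] by simp
    show "AE x in M. norm (f x * v x) \<le> norm (K * f x)"
    proof (rule AE_I2)
      fix x assume "x \<in> space M"
      then have "\<bar>f x\<bar> * \<bar>v x\<bar> \<le> \<bar>f x\<bar> * \<bar>K\<bar>" using K by (intro mult_left_mono) auto
      then show "norm (f x * v x) \<le> norm (K * f x)" by (simp add: abs_mult mult.commute)
    qed
  qed
qed

lemma integrable_mem: assumes "u \<in> V" shows "integrable M u"
proof -
  interpret finite_measure M by (rule finite_measure)
  obtain K where "\<forall>x\<in>space M. \<bar>u x\<bar> \<le> K" using bounded_mem[OF assms] by blast
  then show ?thesis
    by (intro integrable_const_bound[where B=K]) (use measurable_mem[OF assms] in auto)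
qed

lemma integrable_mult_mems: "u \<in> V \<Longrightarrow> v \<in> V \<Longrightarrow> integrable M (\<lambda>x. u x * v x)"
  by (intro integrable_mult_mem integrable_mem measurable_mem)

lemma L2_inner_sum_left:
  assumes "finite S" "\<And>i. i \<in> S \<Longrightarrow> g i \<in> V" "w \<in> V"
  shows "L2_inner M (\<lambda>x. \<Sum>i\<in>S. a i * g i x) w = (\<Sum>i\<in>S. a i * L2_inner M (g i) w)"
proof -
  have "L2_inner M (\<lambda>x. \<Sum>i\<in>S. a i * g i x) w = (\<integral>x. (\<Sum>i\<in>S. a i * (g i x * w x)) \<partial>M)"
    unfolding L2_inner_def by (simp add: sum_distrib_right mult.assoc)
  also have "\<dots> = (\<Sum>i\<in>S. a i * L2_inner M (g i) w)"
    unfolding L2_inner_def using assms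
    by (subst Bochner_Integration.integral_sum) (auto intro: integrable_mult_mems)
  finally show ?thesis .
qed

lemma L2_inner_sum_right:
  assumes "finite S" "\<And>i. i \<in> S \<Longrightarrow> g i \<in> V" "integrable M f" "f \<in> borel_measurable M"
  shows "L2_inner M f (\<lambda>x. \<Sum>i\<in>S. a i * g i x) = (\<Sum>i\<in>S. a i * L2_inner M f (g i))"
proof -
  have "L2_inner M f (\<lambda>x. \<Sum>i\<in>S. a i * g i x) = (\<integral>x. (\<Sum>i\<in>S. a i * (f x * g i x)) \<partial>M)"
    unfolding L2_inner_def by (simp add: sum_distrib_left mult_ac)
  also have "\<dots> = (\<Sum>i\<in>S. a i * L2_inner M f (g i))"
    unfolding L2_inner_def using assms
    by (subst Bochner_Integration.integral_sum) (auto intro: integrable_mult_mem)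
  finally show ?thesis .
qed

lemma L2_inner_diff_left:
  "u \<in> V \<Longrightarrow> v \<in> V \<Longrightarrow> w \<in> V \<Longrightarrow> L2_inner M (\<lambda>x. u x - v x) w = L2_inner M u w - L2_inner M v w"
  unfolding L2_inner_def by (simp add: left_diff_distrib integrable_mult_mems)

lemma L2_inner_add_left:
  "u \<in> V \<Longrightarrow> v \<in> V \<Longrightarrow> w \<in> V \<Longrightarrow> L2_inner M (\<lambda>x. u x + v x) w = L2_inner M u w + L2_inner M v w"
  unfolding L2_inner_def by (simp add: distrib_right integrable_mult_mems)

lemma L2_inner_orthonormal_sum:
  assumes "finite E" "E \<subseteq> V" "orthonormal_on M E" "e' \<in> E"
  shows "L2_inner M (\<lambda>x. \<Sum>e\<in>E. c e * e x) e' = c e'"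
proof -
  have "L2_inner M (\<lambda>x. \<Sum>e\<in>E. c e * e x) e' = (\<Sum>e\<in>E. c e * L2_inner M e e')"
    using assms by (intro L2_inner_sum_left) auto
  also have "\<dots> = (\<Sum>e\<in>E. if e = e' then c e else 0)"
    using assms(3,4) by (intro sum.cong) (auto simp: orthonormal_on_def)
  also have "\<dots> = c e'" using assms(1,4) by (simp add: sum.delta)
  finally show ?thesis .
qed

lemma L2_inner_orthogonal_sum:
  assumes "finite E" "E \<subseteq> V" "w \<in> V" "\<forall>e\<in>E. L2_inner M e w = 0"
  shows "L2_inner M (\<lambda>x. \<Sum>e\<in>E. c e * e x) w = 0"
  using assms by (subst L2_inner_sum_left) auto

lemma expands_in_sum:
  assumes E: "finite E" "E \<subseteq> V" and I: "finite I" "\<And>i. i \<in> I \<Longrightarrow> m i \<in> V"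
    and exp: "\<And>i. i \<in> I \<Longrightarrow> expands_in M E (m i)"
  shows "expands_in M E (\<lambda>x. \<Sum>i\<in>I. d i * m i x)"
  unfolding expands_in_def
proof
  fix x assume x: "x \<in> space M"
  have "(\<Sum>i\<in>I. d i * m i x) = (\<Sum>i\<in>I. d i * (\<Sum>e\<in>E. L2_inner M (m i) e * e x))"
    using exp x by (intro sum.cong) (auto simp: expands_in_def)
  also have "\<dots> = (\<Sum>e\<in>E. (\<Sum>i\<in>I. d i * L2_inner M (m i) e) * e x)"
    by (simp add: sum_distrib_left sum_distrib_right mult.assoc sum.swap[of _ I])
  also have "\<dots> = (\<Sum>e\<in>E. L2_inner M (\<lambda>x. \<Sum>i\<in>I. d i * m i x) e * e x)"
    using E I by (intro sum.cong refl arg_cong2[where f="(*)"] L2_inner_sum_left[symmetric]) auto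
  finally show "(\<Sum>i\<in>I. d i * m i x) = (\<Sum>e\<in>E. L2_inner M (\<lambda>x. \<Sum>i\<in>I. d i * m i x) e * e x)" .
qed

lemma expands_in_insert:
  assumes E: "finite E" "E \<subseteq> V" and e0: "e0 \<in> V" "\<forall>e\<in>E. L2_inner M e e0 = 0"
    and v: "expands_in M E v"
  shows "expands_in M (insert e0 E) v"
proof (cases "e0 \<in> E")
  case False
  have "L2_inner M v e0 = L2_inner M (\<lambda>x. \<Sum>e\<in>E. L2_inner M v e * e x) e0"
    using v by (intro L2_inner_cong) (auto simp: expands_in_def)
  also have "\<dots> = 0" using E e0 by (rule L2_inner_orthogonal_sum)
  finally show ?thesis using v E False by (simp add: expands_in_def)
qed (use v in \<open>simp add: insert_absorb\<close>)

lemma orthonormal_on_insert: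
  assumes "orthonormal_on M E" "\<forall>e\<in>E. L2_inner M e e0 = 0" "L2_inner M e0 e0 = 1"
  shows "orthonormal_on M (insert e0 E)"
proof -
  have "e0 \<notin> E" using assms(2,3) by auto
  moreover have "L2_inner M e0 e = 0" if "e \<in> E" for e
    using assms(2) that L2_inner_commute[of M e0 e] by simp
  ultimately show ?thesis using assms unfolding orthonormal_on_def by auto
qed

lemma normalized_residual:
  assumes hV: "h \<in> V" and h_orth: "\<forall>e\<in>E. L2_inner M e h = 0" and nonzero: "L2_inner M h h \<noteq> 0"
  defines "\<sigma> \<equiv> sqrt (L2_inner M h h)"
  defines "e0 \<equiv> \<lambda>x. h x / \<sigma>"
  shows "\<sigma> > 0" and "e0 \<in> V" and "\<forall>e\<in>E. L2_inner M e e0 = 0"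
    and "L2_inner M h e0 = \<sigma>" and "L2_inner M e0 e0 = 1"
proof -
  show \<sigma>: "\<sigma> > 0" using nonzero L2_inner_self_nonneg[of M h] by (simp add: \<sigma>_def)
  have \<sigma>\<sigma>: "\<sigma> * \<sigma> = L2_inner M h h" using L2_inner_self_nonneg[of M h] by (simp add: \<sigma>_def)
  show "e0 \<in> V" using lincomb_mem[OF hV hV, of "1/\<sigma>" 0] by (simp add: e0_def)
  show "\<forall>e\<in>E. L2_inner M e e0 = 0"
  proof
    fix e assume e: "e \<in> E"
    have "L2_inner M e e0 = L2_inner M e0 e" by (rule L2_inner_commute)
    also have "\<dots> = L2_inner M h e / \<sigma>" unfolding e0_def by (rule L2_inner_divide_left)
    also have "L2_inner M h e = L2_inner M e h" by (rule L2_inner_commute)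
    finally show "L2_inner M e e0 = 0" using h_orth e by simp
  qed
  have "L2_inner M h e0 = L2_inner M e0 h" by (rule L2_inner_commute)
  also have "\<dots> = L2_inner M h h / \<sigma>" unfolding e0_def by (rule L2_inner_divide_left)
  also have "\<dots> = \<sigma>" using \<sigma> \<sigma>\<sigma> by (metis nonzero_mult_div_cancel_left order_less_irrefl)
  finally show h_e0: "L2_inner M h e0 = \<sigma>" .
  have "L2_inner M e0 e0 = L2_inner M h e0 / \<sigma>"
    using L2_inner_divide_left[of M h \<sigma> e0] by (simp only: e0_def[symmetric])
  then show "L2_inner M e0 e0 = 1" using h_e0 \<sigma> by simp
qed

lemma gram_schmidt_step:
  assumes E: "finite E" "E \<subseteq> V" "orthonormal_on M E" and u: "u \<in> V"
  shows "\<exists>E'. finite E' \<and> E' \<subseteq> V \<and> orthonormal_on M E' \<and> expands_in M E' u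
           \<and> (\<forall>v. expands_in M E v \<longrightarrow> expands_in M E' v)"
proof -
  define s where "s = (\<lambda>x. \<Sum>e\<in>E. L2_inner M u e * e x)"
  define h where "h = (\<lambda>x. u x - s x)"
  have sV: "s \<in> V" unfolding s_def using E by (intro sum_mem) auto
  have hV: "h \<in> V" using lincomb_mem[OF u sV, of 1 "-1"] by (simp add: h_def)
  have h_orth: "\<forall>e\<in>E. L2_inner M e h = 0"
  proof
    fix e assume e: "e \<in> E"
    have "L2_inner M h e = L2_inner M u e - L2_inner M s e"
      unfolding h_def using u sV e E by (intro L2_inner_diff_left) auto
    also have "L2_inner M s e = L2_inner M u e"
      unfolding s_def using E e by (rule L2_inner_orthonormal_sum)
    finally show "L2_inner M e h = 0" by (simp add: L2_inner_commute)
  qed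
  show ?thesis
  proof (cases "L2_inner M h h = 0")
    case True
    then have "expands_in M E u"
      using L2_inner_self_eq_0[OF hV] by (auto simp: expands_in_def h_def s_def)
    with E show ?thesis by blast
  next
    case False
    define \<sigma> where "\<sigma> = sqrt (L2_inner M h h)"
    define e0 where "e0 = (\<lambda>x. h x / \<sigma>)"
    note e0 = normalized_residual[OF hV h_orth False, folded \<sigma>_def, folded e0_def]
    have u_e0: "L2_inner M u e0 = \<sigma>"
    proof -
      have "L2_inner M u e0 = L2_inner M h e0 + L2_inner M s e0"
        using L2_inner_add_left[OF hV sV e0(2)] by (simp add: h_def)
      also have "L2_inner M s e0 = 0"
        unfolding s_def using E(1,2) e0(2,3) by (rule L2_inner_orthogonal_sum)
      finally show ?thesis using e0(4) by simp
    qed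
    have e0E: "e0 \<notin> E" using e0(3,5) by auto
    have "expands_in M (insert e0 E) u"
    proof -
      have "u x = \<sigma> * e0 x + s x" for x using e0(1) by (simp add: e0_def h_def)
      then show ?thesis using E(1) e0E by (simp add: expands_in_def u_e0 s_def)
    qed
    moreover have "expands_in M (insert e0 E) v" if "expands_in M E v" for v
      using E(1,2) e0(2,3) that by (rule expands_in_insert)
    moreover have "orthonormal_on M (insert e0 E)"
      using E(3) e0(3,5) by (rule orthonormal_on_insert)
    ultimately show ?thesis using E e0(2) by (intro exI[of _ "insert e0 E"]) auto
  qed
qed

lemma exists_orthonormal_expansion:
  assumes "finite U" "U \<subseteq> V"
  shows "\<exists>E. finite E \<and> E \<subseteq> V \<and> orthonormal_on M E \<and> (\<forall>u\<in>U. expands_in M E u)"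
  using assms
proof (induction U rule: finite_induct)
  case empty
  show ?case by (intro exI[of _ "{}"]) (simp add: orthonormal_on_def)
next
  case (insert u U)
  then obtain E where E: "finite E" "E \<subseteq> V" "orthonormal_on M E" and U: "\<forall>v\<in>U. expands_in M E v"
    by auto
  have "u \<in> V" using insert.prems by simp
  from gram_schmidt_step[OF E this] obtain E' where E': "finite E'" "E' \<subseteq> V" "orthonormal_on M E'"
    and "expands_in M E' u" "\<forall>v. expands_in M E v \<longrightarrow> expands_in M E' v"
    by blast
  with U show ?case by blast
qed

lemma exists_orthogonal_projection:
  assumes E: "finite E" "E \<subseteq> V" "orthonormal_on M E"
    and f: "integrable M f" "f \<in> borel_measurable M"
  shows "\<exists>P\<in>V. \<forall>u\<in>V. expands_in M E u \<longrightarrow> (\<integral>x. (f x - P x) * u x \<partial>M) = 0"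
proof
  define P where "P = (\<lambda>x. \<Sum>e\<in>E. L2_inner M f e * e x)"
  show PV: "P \<in> V" unfolding P_def using E by (intro sum_mem) auto
  show "\<forall>u\<in>V. expands_in M E u \<longrightarrow> (\<integral>x. (f x - P x) * u x \<partial>M) = 0"
  proof (intro ballI impI)
    fix u assume u: "u \<in> V" "expands_in M E u"
    have "(\<integral>x. (f x - P x) * u x \<partial>M) = L2_inner M f u - L2_inner M P u"
      unfolding L2_inner_def using integrable_mult_mem[OF f u(1)] integrable_mult_mems[OF PV u(1)]
      by (simp add: left_diff_distrib)
    also have "L2_inner M f u = L2_inner M f (\<lambda>x. \<Sum>e\<in>E. L2_inner M u e * e x)"
      using u(2) unfolding L2_inner_def expands_in_def by (intro Bochner_Integration.integral_cong) auto
    also have "\<dots> = (\<Sum>e\<in>E. L2_inner M u e * L2_inner M f e)"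
      using E f by (intro L2_inner_sum_right) auto
    also have "L2_inner M P u = (\<Sum>e\<in>E. L2_inner M f e * L2_inner M e u)"
      unfolding P_def using E u by (intro L2_inner_sum_left) auto
    finally show "(\<integral>x. (f x - P x) * u x \<partial>M) = 0"
      by (simp add: L2_inner_commute[of M u] mult.commute)
  qed
qed

text \<open>On an orthonormal system the coefficients are controlled by the L1 norm, hence so is the
  supremum: the equivalence of norms in finite dimension.\<close>
lemma sup_le_L1_if_expands_in:
  assumes E: "finite E" "E \<subseteq> V"
  shows "\<exists>K. \<forall>u\<in>V. expands_in M E u \<longrightarrow> (\<forall>x\<in>space M. \<bar>u x\<bar> \<le> K * (\<integral>y. \<bar>u y\<bar> \<partial>M))"
proof -
  have "\<forall>e\<in>E. \<exists>K. \<forall>x\<in>space M. \<bar>e x\<bar> \<le> K" using E bounded_mem by blast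
  then obtain Kf where Kf: "\<And>e x. e \<in> E \<Longrightarrow> x \<in> space M \<Longrightarrow> \<bar>e x\<bar> \<le> Kf e"
    by metis
  define K where "K = (\<Sum>e\<in>E. \<bar>Kf e\<bar> * \<bar>Kf e\<bar>)"
  have "\<bar>u x\<bar> \<le> K * (\<integral>y. \<bar>u y\<bar> \<partial>M)" if u: "u \<in> V" "expands_in M E u" and x: "x \<in> space M" for u x
  proof -
    have coeff: "\<bar>L2_inner M u e\<bar> \<le> \<bar>Kf e\<bar> * (\<integral>y. \<bar>u y\<bar> \<partial>M)" if e: "e \<in> E" for e
    proof -
      have "\<bar>L2_inner M u e\<bar> \<le> (\<integral>y. \<bar>u y * e y\<bar> \<partial>M)"
        unfolding L2_inner_def by (rule integral_abs_bound)
      also have "\<dots> \<le> (\<integral>y. \<bar>Kf e\<bar> * \<bar>u y\<bar> \<partial>M)"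
      proof (rule integral_mono)
        show "integrable M (\<lambda>y. \<bar>u y * e y\<bar>)" using integrable_mult_mems[OF u(1)] e E by auto
        show "integrable M (\<lambda>y. \<bar>Kf e\<bar> * \<bar>u y\<bar>)" using integrable_mem[OF u(1)] by simp
        show "\<bar>u y * e y\<bar> \<le> \<bar>Kf e\<bar> * \<bar>u y\<bar>" if "y \<in> space M" for y
        proof -
          have "\<bar>u y * e y\<bar> = \<bar>e y\<bar> * \<bar>u y\<bar>" by (simp add: abs_mult)
          also have "\<dots> \<le> \<bar>Kf e\<bar> * \<bar>u y\<bar>" using Kf[OF e that] by (intro mult_right_mono) auto
          finally show ?thesis .
        qed
      qed
      finally show ?thesis by simp
    qed
    have "\<bar>u x\<bar> \<le> (\<Sum>e\<in>E. \<bar>L2_inner M u e\<bar> * \<bar>e x\<bar>)"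
      using u(2) x unfolding expands_in_def by (metis (no_types, lifting) abs_mult sum.cong sum_abs)
    also have "\<dots> \<le> (\<Sum>e\<in>E. (\<bar>Kf e\<bar> * (\<integral>y. \<bar>u y\<bar> \<partial>M)) * \<bar>Kf e\<bar>)"
      using coeff Kf x by (intro sum_mono mult_mono) (auto intro: order_trans[OF _ abs_ge_self])
    also have "\<dots> = K * (\<integral>y. \<bar>u y\<bar> \<partial>M)"
      unfolding K_def sum_distrib_right by (intro sum.cong refl) (simp add: mult_ac)
    finally show ?thesis .
  qed
  then show ?thesis by blast
qed

end

section \<open>Polynomials on balls\<close>

lemma emeasure_lebesgue_ball:
  "emeasure lebesgue (ball (c::'a::euclidean_space) r) = ennreal (measure lebesgue (ball c r))"
  by (rule emeasure_eq_measure2[OF lmeasurable_ball])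

lemma measure_lebesgue_ball:
  "r \<ge> 0 \<Longrightarrow> measure lebesgue (ball (c::'a::euclidean_space) r) = r ^ DIM('a) * measure lebesgue (ball (0::'a) 1)"
  using content_ball_conv_unit_ball[of r c] by simp

lemma measure_lebesgue_ball_pos: "r > 0 \<Longrightarrow> measure lebesgue (ball (c::'a::euclidean_space) r) > 0"
  by (simp add: content_ball_pos)

lemma polys_bounded_on_cball:
  assumes "u \<in> polys k" shows "\<exists>K. \<forall>x\<in>cball c r. \<bar>u x\<bar> \<le> K"
proof -
  have "compact (u ` cball c r)"
    using assms by (intro compact_continuous_image continuous_on_polys) auto
  then obtain K where "\<forall>y\<in>u ` cball c r. norm y \<le> K" using compact_imp_bounded bounded_iff by metis
  then show ?thesis by auto
qed

lemma continuous_eq_0_if_AE_eq_0_on_open: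
  fixes u :: "'a::euclidean_space \<Rightarrow> real"
  assumes u: "continuous_on UNIV u" and U: "open U" "x \<in> U"
    and ae: "AE y in lebesgue. y \<in> U \<longrightarrow> u y = 0"
  shows "u x = 0"
proof (rule ccontr)
  assume "u x \<noteq> 0"
  have "open (U \<inter> {y. u y \<noteq> 0})"
    using U(1) open_Collect_neq[OF u continuous_on_const[of UNIV 0]] by (rule open_Int)
  then obtain \<delta> where \<delta>: "\<delta> > 0" "ball x \<delta> \<subseteq> U \<inter> {y. u y \<noteq> 0}"
    using \<open>u x \<noteq> 0\<close> U(2) open_contains_ball by blast
  have "AE y in lebesgue. y \<notin> ball x \<delta>" using ae by eventually_elim (use \<delta>(2) in auto)
  then have "emeasure lebesgue (ball x \<delta>) = 0"
    by (subst (asm) AE_iff_measurable[of "ball x \<delta>"]) auto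
  then show False using measure_lebesgue_ball_pos[OF \<delta>(1), of x] by (simp add: emeasure_lebesgue_ball)
qed

lemma bounded_L2_space_polys_ball:
  assumes "r > 0" shows "bounded_L2_space (lebesgue_on (ball (c::'a::euclidean_space) r)) (polys k)"
proof (rule bounded_L2_space.intro)
  show "finite_measure (lebesgue_on (ball c r))" by (simp add: finite_measure_lebesgue_on)
  show "(\<lambda>x. 0) \<in> polys k" by (rule polys_zero)
  show "(\<lambda>x. a * u x + b * v x) \<in> polys k" if "u \<in> polys k" "v \<in> polys k" for u v a b
    using that by (intro polys_add polys_cmult)
  show "u \<in> borel_measurable (lebesgue_on (ball c r))" if "u \<in> polys k" for u
    using that by (intro continuous_imp_measurable_on_sets_lebesgue continuous_on_polys) auto
  show "\<exists>K. \<forall>x\<in>space (lebesgue_on (ball c r)). \<bar>u x\<bar> \<le> K" if u: "u \<in> polys k" for u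
  proof -
    obtain K where "\<forall>x\<in>cball c r. \<bar>u x\<bar> \<le> K" using polys_bounded_on_cball[OF u] by blast
    then show ?thesis by (intro exI[of _ K]) auto
  qed
  show "\<forall>x\<in>space (lebesgue_on (ball c r)). u x = 0"
    if u: "u \<in> polys k" and uu: "L2_inner (lebesgue_on (ball c r)) u u = 0" for u
  proof -
    interpret finite_measure "lebesgue_on (ball c r)" by (simp add: finite_measure_lebesgue_on)
    obtain K where K: "\<forall>x\<in>cball c r. \<bar>u x\<bar> \<le> K" using polys_bounded_on_cball[OF u] by blast
    have "integrable (lebesgue_on (ball c r)) (\<lambda>x. u x * u x)"
    proof (rule integrable_const_bound[where B="K * K"])
      show "AE x in lebesgue_on (ball c r). norm (u x * u x) \<le> K * K"
      proof (rule AE_I2)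
        fix x assume "x \<in> space (lebesgue_on (ball c r))"
        then have "\<bar>u x\<bar> \<le> K" using K by auto
        then have "\<bar>u x\<bar> * \<bar>u x\<bar> \<le> K * K" by (meson abs_ge_zero mult_mono order_trans)
        then show "norm (u x * u x) \<le> K * K" by (simp add: abs_mult)
      qed
      show "(\<lambda>x. u x * u x) \<in> borel_measurable (lebesgue_on (ball c r))"
        using u by (intro borel_measurable_times continuous_imp_measurable_on_sets_lebesgue continuous_on_polys) auto
    qed
    then have "AE x in lebesgue_on (ball c r). u x * u x = 0"
      using uu integral_nonneg_eq_0_iff_AE[of "lebesgue_on (ball c r)" "\<lambda>x. u x * u x"]
      by (simp add: L2_inner_def)
    then have "AE x in lebesgue. x \<in> ball c r \<longrightarrow> u x = 0"
      by (subst (asm) AE_restrict_space_iff) auto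
    then have "u x = 0" if "x \<in> ball c r" for x
      using continuous_eq_0_if_AE_eq_0_on_open[OF continuous_on_polys[OF u] open_ball that] by blast
    then show ?thesis by simp
  qed
qed

lemma polys_orthonormal_expansion_on_ball:
  assumes "r > 0"
  obtains E where "finite E" "E \<subseteq> polys k" "orthonormal_on (lebesgue_on (ball (c::'a::euclidean_space) r)) E"
    "\<And>Q. Q \<in> polys k \<Longrightarrow> expands_in (lebesgue_on (ball c r)) E Q"
proof -
  interpret bounded_L2_space "lebesgue_on (ball c r)" "polys k"
    by (rule bounded_L2_space_polys_ball[OF assms])
  obtain E where E: "finite E" "E \<subseteq> polys k" "orthonormal_on (lebesgue_on (ball c r)) E"
    and monom: "\<forall>u\<in>Defs.monom ` multi_idx k. expands_in (lebesgue_on (ball c r)) E u"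
    using exists_orthonormal_expansion[of "Defs.monom ` multi_idx k"] finite_multi_idx polys_monom
    by blast
  have "expands_in (lebesgue_on (ball c r)) E Q" if Q: "Q \<in> polys k" for Q
  proof -
    obtain d where "Q = (\<lambda>x. \<Sum>\<gamma>\<in>multi_idx k. d \<gamma> * Defs.monom \<gamma> x)"
      using Q by (auto simp: mem_polys_iff)
    then show ?thesis
      using monom by (simp add: expands_in_sum E(1,2) finite_multi_idx polys_monom)
  qed
  with E that show ?thesis by blast
qed

lemma polys_eq_0_if_moments_eq_0:
  assumes r: "r > 0" and D: "D \<in> polys k"
    and moments: "\<And>\<gamma>. \<gamma> \<in> multi_idx k \<Longrightarrow> L2_inner (lebesgue_on (ball c r)) (Defs.monom \<gamma>) D = 0"
  shows "D x = 0"
proof -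
  let ?M = "lebesgue_on (ball (c::'a::euclidean_space) r)"
  interpret bounded_L2_space ?M "polys k" by (rule bounded_L2_space_polys_ball[OF r])
  obtain d where d: "D = (\<lambda>x. \<Sum>\<gamma>\<in>multi_idx k. d \<gamma> * Defs.monom \<gamma> x)"
    using D by (auto simp: mem_polys_iff)
  have "L2_inner ?M D D = (\<Sum>\<gamma>\<in>multi_idx k. d \<gamma> * L2_inner ?M (Defs.monom \<gamma>) D)"
    by (subst (1) d) (rule L2_inner_sum_left[OF finite_multi_idx polys_monom D])
  also have "\<dots> = 0" by (simp add: moments)
  finally have "\<forall>y\<in>space ?M. D y = 0" by (rule L2_inner_self_eq_0[OF D])
  then have "\<And>y. y \<in> ball c r \<Longrightarrow> D y = 0" by simp
  then show ?thesis by (rule polys_eq_0_if_vanishes_on_ball[OF D r])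
qed

lemma set_integral_ball_eq_integral_restrict:
  fixes g :: "'a::euclidean_space \<Rightarrow> real"
  shows "(LINT y:ball c r|lebesgue. g y) = (\<integral>y. g y \<partial>lebesgue_on (ball c r))"
  unfolding set_lebesgue_integral_def by (rule integral_restrict_space[symmetric]) simp

lemma poly_proj_in_polys:
  fixes f :: "'a::euclidean_space \<Rightarrow> real"
  assumes r: "r > 0" and f: "integrable (lebesgue_on (ball c r)) f" "f \<in> borel_measurable (lebesgue_on (ball c r))"
  shows "poly_proj k (ball c r) f \<in> polys k"
proof -
  let ?M = "lebesgue_on (ball c r)"
  let ?proj = "\<lambda>P. P \<in> polys k \<and>
    (\<forall>\<gamma>\<in>multi_idx k. (LINT y:ball c r|lebesgue. (f y - P y) * Defs.monom \<gamma> y) = 0)"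
  interpret bounded_L2_space ?M "polys k" by (rule bounded_L2_space_polys_ball[OF r])
  obtain E where E: "finite E" "E \<subseteq> polys k" "orthonormal_on ?M E"
    and expands: "\<And>Q. Q \<in> polys k \<Longrightarrow> expands_in ?M E Q"
    using polys_orthonormal_expansion_on_ball[OF r] by metis
  obtain P where P_mem: "P \<in> polys k"
    and P_orth: "\<forall>u\<in>polys k. expands_in ?M E u \<longrightarrow> (\<integral>x. (f x - P x) * u x \<partial>?M) = 0"
    using exists_orthogonal_projection[OF E f] by blast
  have "(LINT y:ball c r|lebesgue. (f y - P y) * Defs.monom \<gamma> y) = 0" if "\<gamma> \<in> multi_idx k" for \<gamma>
    using P_orth expands[OF polys_monom[OF that]] polys_monom[OF that]
    by (simp add: set_integral_ball_eq_integral_restrict)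
  with P_mem have P: "?proj P" by blast
  have moment_eq: "(\<integral>x. (f x - Q x) * Defs.monom \<gamma> x \<partial>?M) = L2_inner ?M f (Defs.monom \<gamma>) - L2_inner ?M Q (Defs.monom \<gamma>)"
    if "Q \<in> polys k" "\<gamma> \<in> multi_idx k" for Q \<gamma>
    using integrable_mult_mem[OF f polys_monom] integrable_mult_mems[OF _ polys_monom] that
    unfolding L2_inner_def by (simp add: left_diff_distrib)
  have unique: "P' = P" if P': "?proj P'" for P'
  proof
    fix x
    have moments: "L2_inner ?M (Defs.monom \<gamma>) (\<lambda>x. P' x - P x) = 0" if \<gamma>: "\<gamma> \<in> multi_idx k" for \<gamma>
    proof -
      have "L2_inner ?M (Defs.monom \<gamma>) (\<lambda>x. P' x - P x) = L2_inner ?M P' (Defs.monom \<gamma>) - L2_inner ?M P (Defs.monom \<gamma>)"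
        using P P' \<gamma> by (simp add: L2_inner_commute[of ?M "Defs.monom \<gamma>"] L2_inner_diff_left polys_monom)
      also have "\<dots> = (\<integral>x. (f x - P x) * Defs.monom \<gamma> x \<partial>?M) - (\<integral>x. (f x - P' x) * Defs.monom \<gamma> x \<partial>?M)"
        using P P' \<gamma> by (simp add: moment_eq)
      also have "\<dots> = 0" using P P' \<gamma> by (simp add: set_integral_ball_eq_integral_restrict)
      finally show ?thesis .
    qed
    have "(\<lambda>x. P' x - P x) \<in> polys k" using P P' by (intro polys_diff) auto
    from polys_eq_0_if_moments_eq_0[OF r this moments] show "P' x = P x" by simp
  qed
  have "?proj (THE P. ?proj P)" using P unique by (rule theI)
  then show ?thesis unfolding poly_proj_def by blast
qed

definition ball_avg :: "('a::euclidean_space \<Rightarrow> real) \<Rightarrow> 'a \<Rightarrow> real \<Rightarrow> ennreal" where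
  "ball_avg f x r = (\<integral>\<^sup>+y\<in>ball x r. ennreal \<bar>f y\<bar> \<partial>lebesgue) / emeasure lebesgue (ball x r)"

definition osc_avg :: "nat \<Rightarrow> ('a::euclidean_space \<Rightarrow> real) \<Rightarrow> 'a \<Rightarrow> real \<Rightarrow> ennreal" where
  "osc_avg k f x r = ball_avg (\<lambda>y. f y - poly_proj k (ball x r) f y) x r"

lemma maximal_eq_SUP_ball_avg: "maximal f x = (SUP r\<in>{0<..}. ball_avg f x r)"
  by (simp add: maximal_def ball_avg_def)

lemma ball_avg_eq:
  assumes "r > 0"
  shows "ball_avg f x r = ennreal (1 / measure lebesgue (ball x r)) * (\<integral>\<^sup>+y\<in>ball x r. ennreal \<bar>f y\<bar> \<partial>lebesgue)"
  using measure_lebesgue_ball_pos[OF assms, of x]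
  by (simp add: ball_avg_def emeasure_lebesgue_ball divide_ennreal_def inverse_ennreal mult.commute divide_inverse)

lemma nn_integral_lborel_affine:
  fixes g :: "'a::euclidean_space \<Rightarrow> ennreal"
  assumes g[measurable]: "g \<in> borel_measurable borel" and r: "r \<noteq> 0"
  shows "(\<integral>\<^sup>+x. g x \<partial>lborel) = ennreal (\<bar>r\<bar> ^ DIM('a)) * (\<integral>\<^sup>+z. g (c + r *\<^sub>R z) \<partial>lborel)"
  by (subst lborel_affine[OF r, of c]) (simp add: nn_integral_density nn_integral_distr nn_integral_cmult)

lemma nn_set_integral_ball_rescale:
  fixes g :: "'a::euclidean_space \<Rightarrow> real"
  assumes g[measurable]: "g \<in> borel_measurable borel" and r: "r > 0"
  shows "(\<integral>\<^sup>+x\<in>ball c r. ennreal \<bar>g x\<bar> \<partial>lebesgue)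
    = ennreal (r ^ DIM('a)) * (\<integral>\<^sup>+z\<in>ball 0 1. ennreal \<bar>g (c + r *\<^sub>R z)\<bar> \<partial>lebesgue)"
proof -
  have [measurable]: "ball c r \<in> sets borel" by simp
  have m: "(\<lambda>x. ennreal \<bar>g x\<bar> * indicator (ball c r) x) \<in> borel_measurable borel" by measurable
  have "(\<integral>\<^sup>+x\<in>ball c r. ennreal \<bar>g x\<bar> \<partial>lebesgue) = (\<integral>\<^sup>+x. ennreal \<bar>g x\<bar> * indicator (ball c r) x \<partial>lborel)"
    by (simp add: nn_integral_completion)
  also have "\<dots> = ennreal (r ^ DIM('a)) *
      (\<integral>\<^sup>+z. ennreal \<bar>g (c + r *\<^sub>R z)\<bar> * indicator (ball c r) (c + r *\<^sub>R z) \<partial>lborel)"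
    using nn_integral_lborel_affine[OF m, of r c] r by simp
  also have "(\<lambda>z. ennreal \<bar>g (c + r *\<^sub>R z)\<bar> * indicator (ball c r) (c + r *\<^sub>R z))
      = (\<lambda>z. ennreal \<bar>g (c + r *\<^sub>R z)\<bar> * indicator (ball 0 1) z)"
    using r by (intro ext) (auto simp: indicator_def dist_norm)
  also have "(\<integral>\<^sup>+z. ennreal \<bar>g (c + r *\<^sub>R z)\<bar> * indicator (ball 0 1) z \<partial>lborel)
      = (\<integral>\<^sup>+z\<in>ball 0 1. ennreal \<bar>g (c + r *\<^sub>R z)\<bar> \<partial>lebesgue)"
    by (rule nn_integral_completion[symmetric]) measurable
  finally show ?thesis .
qed

text \<open>Scaling the unit-ball case of the norm equivalence; the constant does not depend on the ball
  because polys k is invariant under affine changes of variables.\<close>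
lemma polys_le_ball_avg:
  "\<exists>K\<ge>0. \<forall>Q\<in>polys k. \<forall>(c::'a::euclidean_space) r y. 0 < r \<longrightarrow> y \<in> ball c r \<longrightarrow>
     ennreal \<bar>Q y\<bar> \<le> ennreal K * ball_avg Q c r"
proof -
  let ?B1 = "ball (0::'a) 1"
  let ?M = "lebesgue_on ?B1"
  interpret bounded_L2_space ?M "polys k" by (rule bounded_L2_space_polys_ball) simp
  obtain E where E: "finite E" "E \<subseteq> polys k" "orthonormal_on ?M E"
    and expands: "\<And>Q. Q \<in> polys k \<Longrightarrow> expands_in ?M E Q"
    using polys_orthonormal_expansion_on_ball[OF zero_less_one, of k 0] by blast
  from sup_le_L1_if_expands_in[OF E(1,2)] obtain K0 where
    K0: "\<forall>u\<in>polys k. expands_in ?M E u \<longrightarrow> (\<forall>x\<in>space ?M. \<bar>u x\<bar> \<le> K0 * (\<integral>y. \<bar>u y\<bar> \<partial>?M))"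
    by blast
  define V1 where "V1 = measure lebesgue ?B1"
  have V1: "V1 > 0" unfolding V1_def by (rule measure_lebesgue_ball_pos) simp
  define K where "K = max K0 0 * V1"
  have "ennreal \<bar>Q y\<bar> \<le> ennreal K * ball_avg Q c r"
    if Q: "Q \<in> polys k" and r: "r > 0" and y: "y \<in> ball c r" for Q r and c y :: 'a
  proof -
    define Q' where "Q' = (\<lambda>z. Q (c + r *\<^sub>R z))"
    have Q': "Q' \<in> polys k" unfolding Q'_def by (rule polys_compose_affine[OF Q])
    define z where "z = (1 / r) *\<^sub>R (y - c)"
    have z: "z \<in> ?B1" using y r by (simp add: z_def dist_norm norm_minus_commute)
    have Qz: "Q y = Q' z" using r by (simp add: Q'_def z_def)
    define I where "I = (\<integral>y. \<bar>Q' y\<bar> \<partial>?M)"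
    have I0: "I \<ge> 0" unfolding I_def by (intro integral_nonneg_AE) auto
    have "ennreal I = (\<integral>\<^sup>+y. ennreal \<bar>Q' y\<bar> \<partial>?M)"
      unfolding I_def using integrable_mem[OF Q'] measurable_mem[OF Q']
      by (intro nn_integral_eq_integral[symmetric]) auto
    also have "\<dots> = (\<integral>\<^sup>+y\<in>?B1. ennreal \<bar>Q' y\<bar> \<partial>lebesgue)"
      by (subst nn_integral_restrict_space) auto
    finally have I: "(\<integral>\<^sup>+y\<in>?B1. ennreal \<bar>Q' y\<bar> \<partial>lebesgue) = ennreal I" ..
    have "ball_avg Q c r = ennreal (1 / (r ^ DIM('a) * V1)) * (ennreal (r ^ DIM('a)) * ennreal I)"
      unfolding ball_avg_eq[OF r] measure_lebesgue_ball[OF less_imp_le[OF r]] V1_def[symmetric]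
        nn_set_integral_ball_rescale[OF borel_measurable_polys[OF Q] r] I[unfolded Q'_def] ..
    also have "\<dots> = ennreal (I / V1)"
      using r V1 I0 by (simp add: ennreal_mult''[symmetric] field_simps)
    finally have avg: "ball_avg Q c r = ennreal (I / V1)" .
    have "\<bar>Q y\<bar> \<le> K0 * I"
      using K0 Q' expands[OF Q'] z unfolding Qz I_def by simp
    also have "\<dots> \<le> max K0 0 * I" using I0 by (intro mult_right_mono) auto
    also have "\<dots> = K * (I / V1)" using V1 by (simp add: K_def)
    finally show ?thesis
      using V1 I0 by (simp add: avg K_def ennreal_mult''[symmetric] ennreal_leI)
  qed
  moreover have "K \<ge> 0" using V1 by (simp add: K_def)
  ultimately show ?thesis by blast
qed

section \<open>Dyadic telescoping of the polynomial projections\<close>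

lemma ball_avg_triangle:
  assumes u[measurable]: "u \<in> borel_measurable lebesgue" and v[measurable]: "v \<in> borel_measurable lebesgue"
    and w: "\<And>y. \<bar>w y\<bar> \<le> \<bar>u y\<bar> + \<bar>v y\<bar>"
  shows "ball_avg w x r \<le> ball_avg u x r + ball_avg v x r"
proof -
  have [measurable]: "ball x r \<in> sets lebesgue" by simp
  have "(\<integral>\<^sup>+y\<in>ball x r. ennreal \<bar>w y\<bar> \<partial>lebesgue)
      \<le> (\<integral>\<^sup>+y. ennreal \<bar>u y\<bar> * indicator (ball x r) y + ennreal \<bar>v y\<bar> * indicator (ball x r) y \<partial>lebesgue)"
  proof (intro nn_integral_mono)
    fix y
    have "ennreal \<bar>w y\<bar> \<le> ennreal \<bar>u y\<bar> + ennreal \<bar>v y\<bar>"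
      using w[of y] by (simp add: ennreal_leI flip: ennreal_plus)
    then show "ennreal \<bar>w y\<bar> * indicator (ball x r) y
        \<le> ennreal \<bar>u y\<bar> * indicator (ball x r) y + ennreal \<bar>v y\<bar> * indicator (ball x r) y"
      by (auto simp: indicator_def)
  qed
  also have "\<dots> = (\<integral>\<^sup>+y\<in>ball x r. ennreal \<bar>u y\<bar> \<partial>lebesgue) + (\<integral>\<^sup>+y\<in>ball x r. ennreal \<bar>v y\<bar> \<partial>lebesgue)"
    by (intro nn_integral_add) measurable
  finally show ?thesis
    unfolding ball_avg_def add_divide_distrib_ennreal[symmetric] by (rule divide_right_mono_ennreal)
qed

lemma ball_avg_le_bound:
  assumes r: "r > 0" and S: "\<And>y. y \<in> ball x r \<Longrightarrow> ennreal \<bar>g y\<bar> \<le> S"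
  shows "ball_avg g x r \<le> S"
proof -
  have "(\<integral>\<^sup>+y\<in>ball x r. ennreal \<bar>g y\<bar> \<partial>lebesgue) \<le> (\<integral>\<^sup>+y\<in>ball x r. S \<partial>lebesgue)"
    using S by (intro nn_integral_mono) (auto simp: indicator_def)
  also have "\<dots> = S * emeasure lebesgue (ball x r)" by (simp add: nn_integral_cmult_indicator)
  finally have "ball_avg g x r \<le> S * emeasure lebesgue (ball x r) / emeasure lebesgue (ball x r)"
    unfolding ball_avg_def by (rule divide_right_mono_ennreal)
  also have "\<dots> = S"
    using measure_lebesgue_ball_pos[OF r, of x] by (simp add: emeasure_lebesgue_ball mult_divide_eq_ennreal)
  finally show ?thesis .
qed

lemma ball_avg_mono_radius:
  fixes g :: "'a::euclidean_space \<Rightarrow> real"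
  assumes r: "0 < r'" "r' \<le> r"
  shows "ball_avg g x r' \<le> ennreal ((r / r') ^ DIM('a)) * ball_avg g x r"
proof -
  define V1 where "V1 = measure lebesgue (ball (0::'a) 1)"
  have V1: "V1 > 0" unfolding V1_def by (rule measure_lebesgue_ball_pos) simp
  have "ball_avg g x r' = ennreal (1 / (r' ^ DIM('a) * V1)) * (\<integral>\<^sup>+y\<in>ball x r'. ennreal \<bar>g y\<bar> \<partial>lebesgue)"
    unfolding ball_avg_eq[OF r(1)] measure_lebesgue_ball[OF less_imp_le[OF r(1)]] V1_def[symmetric] ..
  also have "\<dots> \<le> ennreal (1 / (r' ^ DIM('a) * V1)) * (\<integral>\<^sup>+y\<in>ball x r. ennreal \<bar>g y\<bar> \<partial>lebesgue)"
    using r by (intro mult_left_mono nn_set_integral_set_mono subset_ball) auto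
  also have "1 / (r' ^ DIM('a) * V1) = (r / r') ^ DIM('a) * (1 / (r ^ DIM('a) * V1))"
    using r V1 by (simp add: power_divide)
  also have "ennreal \<dots> = ennreal ((r / r') ^ DIM('a)) * ennreal (1 / (r ^ DIM('a) * V1))"
    using r V1 by (intro ennreal_mult) auto
  also have "\<dots> * (\<integral>\<^sup>+y\<in>ball x r. ennreal \<bar>g y\<bar> \<partial>lebesgue) = ennreal ((r / r') ^ DIM('a)) * ball_avg g x r"
  proof -
    have r0: "0 < r" using r by simp
    show ?thesis
      unfolding ball_avg_eq[OF r0] measure_lebesgue_ball[OF less_imp_le[OF r0]] V1_def[symmetric]
      by (simp only: mult.assoc)
  qed
  finally show ?thesis .
qed

lemma exists_dyadic_interval:
  assumes "0 < r" "r < 1"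
  shows "\<exists>j. (1/2::real) ^ Suc j < r \<and> r \<le> (1/2) ^ j"
proof -
  obtain N where N: "(1/2::real) ^ N < r" using real_arch_pow_inv[OF assms(1), of "1/2"] by auto
  define j0 where "j0 = (LEAST N. (1/2::real) ^ N < r)"
  have j0: "(1/2::real) ^ j0 < r" unfolding j0_def by (rule LeastI[of _ N]) (rule N)
  have "j0 \<noteq> 0" using j0 assms by (intro notI) simp
  then obtain j where j: "j0 = Suc j" by (cases j0) auto
  then have "\<not> (1/2::real) ^ j < r" unfolding j0_def by (intro not_less_Least) simp
  with j0 j show ?thesis by (intro exI[of _ j]) simp
qed

lemma ennreal_collect_dyadic_terms:
  fixes K :: real and Y T :: ennreal
  assumes K: "K \<ge> 0"
  shows "T + (ennreal K * (Y + T) + ennreal K * (ennreal (2 ^ n) * T + T))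
    = ennreal K * Y + ennreal (K * (2 ^ n + 2) + 1) * T"
proof -
  have c: "ennreal (K * (2 ^ n + 2) + 1) = ennreal (K * (2 ^ n + 2)) + 1"
    using K by (subst ennreal_plus) auto
  have a: "ennreal (K * (2 ^ n + 2)) = ennreal K * ennreal (2 ^ n + 2)"
    using K by (intro ennreal_mult) auto
  have b: "ennreal ((2::real) ^ n + 2) = ennreal (2 ^ n) + 2"
    by (subst ennreal_plus) auto
  show ?thesis unfolding c a b by (simp add: distrib_left distrib_right mult_2_right ac_simps)
qed

context
  fixes f :: "'a::euclidean_space \<Rightarrow> real" and k :: nat and K :: real
  assumes f_meas: "f \<in> borel_measurable lebesgue"
    and f_loc: "\<And>c r. r > 0 \<Longrightarrow> integrable (lebesgue_on (ball c r)) f"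
    and K: "K \<ge> 0"
    and polys_le_K_avg: "\<And>Q c r y. Q \<in> polys k \<Longrightarrow> 0 < r \<Longrightarrow> y \<in> ball c r \<Longrightarrow>
      ennreal \<bar>Q y\<bar> \<le> ennreal K * ball_avg Q (c::'a) r"
begin

lemma poly_proj_mem: "r > 0 \<Longrightarrow> poly_proj k (ball c r) f \<in> polys k"
  by (rule poly_proj_in_polys[OF _ f_loc measurable_restrict_space1[OF f_meas]])

lemma poly_proj_measurable: "r > 0 \<Longrightarrow> poly_proj k (ball c r) f \<in> borel_measurable lebesgue"
  by (rule measurable_completion) (simp add: borel_measurable_polys[OF poly_proj_mem])

text \<open>Telescoping over the dyadic balls B(x, 2^-j): on each ball the polynomial P_(j+1) - P_j is
  controlled by its mean, hence by the oscillations on the two balls.\<close>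
lemma poly_proj_dyadic_le:
  fixes x :: 'a
  defines "e \<equiv> \<lambda>i. osc_avg k f x ((1/2) ^ i)"
  assumes "y \<in> ball x ((1/2) ^ j)"
  shows "ennreal \<bar>poly_proj k (ball x ((1/2) ^ j)) f y\<bar>
    \<le> ennreal K * (ball_avg f x 1 + e 0) + ennreal K * (\<Sum>i<j. ennreal (2 ^ DIM('a)) * e i + e (Suc i))"
  using assms(2)
proof (induction j arbitrary: y)
  case 0
  define P where "P = poly_proj k (ball x 1) f"
  have P: "P \<in> polys k" unfolding P_def by (rule poly_proj_mem) simp
  have "ennreal \<bar>P y\<bar> \<le> ennreal K * ball_avg P x 1"
    using polys_le_K_avg[OF P, of 1 y x] 0 by simp
  also have "\<dots> \<le> ennreal K * (ball_avg f x 1 + ball_avg (\<lambda>y. f y - P y) x 1)"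
    using f_meas poly_proj_measurable[of 1 x] by (intro mult_left_mono ball_avg_triangle) (auto simp: P_def)
  finally show ?case by (simp add: e_def osc_avg_def P_def)
next
  case (Suc j)
  define \<rho> where "\<rho> = (1/2::real) ^ j"
  define \<rho>' where "\<rho>' = (1/2::real) ^ Suc j"
  have \<rho>: "0 < \<rho>'" "\<rho>' \<le> \<rho>" "\<rho> / \<rho>' = 2" by (simp_all add: \<rho>_def \<rho>'_def)
  define P where "P = poly_proj k (ball x \<rho>) f"
  define P' where "P' = poly_proj k (ball x \<rho>') f"
  have mem: "P \<in> polys k" "P' \<in> polys k"
    unfolding P_def P'_def using \<rho> by (auto intro: poly_proj_mem)
  have meas: "P \<in> borel_measurable lebesgue" "P' \<in> borel_measurable lebesgue"
    unfolding P_def P'_def using \<rho> by (auto intro: poly_proj_measurable)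
  have y: "y \<in> ball x \<rho>'" "y \<in> ball x \<rho>" using Suc.prems \<rho> by (auto simp: \<rho>'_def)
  have triangle: "ball_avg (\<lambda>z. P' z - P z) x \<rho>' \<le> ball_avg (\<lambda>z. f z - P z) x \<rho>' + ball_avg (\<lambda>z. f z - P' z) x \<rho>'"
    using f_meas meas by (intro ball_avg_triangle) auto
  have shrink: "ball_avg (\<lambda>z. f z - P z) x \<rho>' \<le> ennreal (2 ^ DIM('a)) * e j"
    using ball_avg_mono_radius[OF \<rho>(1,2), of "\<lambda>z. f z - P z" x] \<rho>(3)
    by (simp add: e_def osc_avg_def P_def \<rho>_def)
  have avg: "ball_avg (\<lambda>z. P' z - P z) x \<rho>' \<le> ennreal (2 ^ DIM('a)) * e j + e (Suc j)"
    using order_trans[OF triangle add_right_mono[OF shrink]]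
    by (simp add: e_def osc_avg_def P'_def \<rho>'_def)
  have "ennreal \<bar>P' y\<bar> \<le> ennreal \<bar>P y\<bar> + ennreal \<bar>P' y - P y\<bar>"
    by (simp add: ennreal_leI flip: ennreal_plus)
  also have "\<dots> \<le> (ennreal K * (ball_avg f x 1 + e 0) + ennreal K * (\<Sum>i<j. ennreal (2 ^ DIM('a)) * e i + e (Suc i)))
      + ennreal K * (ennreal (2 ^ DIM('a)) * e j + e (Suc j))"
  proof (rule add_mono)
    show "ennreal \<bar>P y\<bar> \<le> ennreal K * (ball_avg f x 1 + e 0) + ennreal K * (\<Sum>i<j. ennreal (2 ^ DIM('a)) * e i + e (Suc i))"
      using Suc.IH[OF y(2)[unfolded \<rho>_def]] by (simp add: P_def \<rho>_def)
    have "ennreal \<bar>P' y - P y\<bar> \<le> ennreal K * ball_avg (\<lambda>z. P' z - P z) x \<rho>'"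
      using \<rho>(1) y(1) by (intro polys_le_K_avg polys_diff mem)
    also have "\<dots> \<le> ennreal K * (ennreal (2 ^ DIM('a)) * e j + e (Suc j))"
      using avg by (rule mult_left_mono) simp
    finally show "ennreal \<bar>P' y - P y\<bar> \<le> ennreal K * (ennreal (2 ^ DIM('a)) * e j + e (Suc j))" .
  qed
  also have "\<dots> = ennreal K * (ball_avg f x 1 + e 0) + ennreal K * (\<Sum>i<Suc j. ennreal (2 ^ DIM('a)) * e i + e (Suc i))"
    by (simp only: sum.lessThan_Suc distrib_left add.assoc)
  finally show ?case unfolding P'_def \<rho>'_def .
qed

lemma ball_avg_dyadic_le:
  fixes x :: 'a
  defines "e \<equiv> \<lambda>i. osc_avg k f x ((1/2) ^ i)"
  shows "ball_avg f x ((1/2) ^ j) \<le> ennreal K * ball_avg f x 1 + ennreal (K * (2 ^ DIM('a) + 2) + 1) * (\<Sum>i. e i)"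
proof -
  define n where "n = DIM('a)"
  define \<rho> where "\<rho> = (1/2::real) ^ j"
  define P where "P = poly_proj k (ball x \<rho>) f"
  define T where "T = (\<Sum>i. e i)"
  have \<rho>: "\<rho> > 0" by (simp add: \<rho>_def)
  have partial_le_T: "(\<Sum>i<m. e (i + d)) \<le> T" for m d
  proof -
    have "(\<Sum>i<m. e (i + d)) = (\<Sum>i\<in>(\<lambda>i. i + d) ` {..<m}. e i)" by (simp add: sum.reindex)
    also have "\<dots> \<le> (\<Sum>i<m + d. e i)" by (intro sum_mono2) auto
    also have "\<dots> \<le> T" unfolding T_def by (intro sum_le_suminf summableI) auto
    finally show ?thesis .
  qed
  have e_le_T: "e i \<le> T" for i using partial_le_T[where m=1 and d=i] by simp
  have sums: "(\<Sum>i<j. ennreal (2 ^ n) * e i + e (Suc i)) \<le> ennreal (2 ^ n) * T + T"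
    using partial_le_T[where m=j and d=0] partial_le_T[where m=j and d=1]
    by (simp add: sum.distrib sum_distrib_left[symmetric] add_mono mult_left_mono)
  have "ball_avg f x \<rho> \<le> ball_avg (\<lambda>y. f y - P y) x \<rho> + ball_avg P x \<rho>"
    using f_meas poly_proj_measurable[OF \<rho>] by (intro ball_avg_triangle) (auto simp: P_def)
  also have "\<dots> \<le> e j + (ennreal K * (ball_avg f x 1 + e 0) + ennreal K * (\<Sum>i<j. ennreal (2 ^ n) * e i + e (Suc i)))"
  proof (rule add_mono)
    show "ball_avg (\<lambda>y. f y - P y) x \<rho> \<le> e j" by (simp add: e_def osc_avg_def P_def \<rho>_def)
    show "ball_avg P x \<rho> \<le> ennreal K * (ball_avg f x 1 + e 0) + ennreal K * (\<Sum>i<j. ennreal (2 ^ n) * e i + e (Suc i))"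
      using poly_proj_dyadic_le[where x=x and j=j] \<rho> unfolding P_def \<rho>_def e_def n_def
      by (intro ball_avg_le_bound) auto
  qed
  also have "\<dots> \<le> T + (ennreal K * (ball_avg f x 1 + T) + ennreal K * (ennreal (2 ^ n) * T + T))"
    using e_le_T sums by (intro add_mono mult_left_mono order_refl) auto
  also have "\<dots> = ennreal K * ball_avg f x 1 + ennreal (K * (2 ^ n + 2) + 1) * T"
    using K by (rule ennreal_collect_dyadic_terms)
  finally show ?thesis unfolding \<rho>_def n_def T_def .
qed

text \<open>Balls of radius at least 1 are handled by the bound Y; a smaller ball lies between two
  consecutive dyadic balls and costs a factor 2^n.\<close>
lemma maximal_le_dyadic_osc:
  assumes Y: "\<And>r. 1 \<le> r \<Longrightarrow> ball_avg f x r \<le> Y"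
  shows "maximal f x \<le> ennreal (2 ^ DIM('a) * K + 1) * Y
    + ennreal (2 ^ DIM('a) * (K * (2 ^ DIM('a) + 2) + 1)) * (\<Sum>j. osc_avg k f x ((1/2) ^ j))"
    (is "_ \<le> ?R")
proof -
  define n where "n = DIM('a)"
  define T where "T = (\<Sum>j. osc_avg k f x ((1/2) ^ j))"
  have "ball_avg f x r \<le> ?R" if r: "r > 0" for r
  proof (cases "r \<ge> 1")
    case True
    have "Y \<le> ennreal (2 ^ n * K + 1) * Y"
      using K mult_right_mono[of 1 "ennreal (2 ^ n * K + 1)" Y] by (simp add: ennreal_leI)
    with Y[OF True] have "ball_avg f x r \<le> ennreal (2 ^ n * K + 1) * Y" by (rule order_trans)
    then show ?thesis unfolding n_def by (rule add_increasing2[OF zero_le])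
  next
    case False
    then obtain j where j: "(1/2) ^ Suc j < r" "r \<le> (1/2) ^ j"
      using exists_dyadic_interval[OF r] by auto
    have "((1/2) ^ j / r) ^ n \<le> (2::real) ^ n"
    proof (intro power_mono)
      show "(1/2) ^ j / r \<le> 2" using j r by (simp add: field_simps)
    qed (use r in simp)
    have "ball_avg f x ((1/2) ^ j) \<le> ennreal K * ball_avg f x 1 + ennreal (K * (2 ^ n + 2) + 1) * T"
      using ball_avg_dyadic_le[where x=x and j=j] unfolding T_def n_def .
    also have "\<dots> \<le> ennreal K * Y + ennreal (K * (2 ^ n + 2) + 1) * T"
      using Y[of 1] by (intro add_right_mono mult_left_mono) auto
    finally have dyadic: "ball_avg f x ((1/2) ^ j) \<le> ennreal K * Y + ennreal (K * (2 ^ n + 2) + 1) * T" .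
    have "ball_avg f x r \<le> ennreal (((1/2) ^ j / r) ^ n) * ball_avg f x ((1/2) ^ j)"
      using ball_avg_mono_radius[OF r j(2), where g=f and x=x] unfolding n_def .
    also have "\<dots> \<le> ennreal (2 ^ n) * ball_avg f x ((1/2) ^ j)"
      using \<open>((1/2) ^ j / r) ^ n \<le> 2 ^ n\<close> by (intro mult_right_mono ennreal_leI) auto
    also have "\<dots> \<le> ennreal (2 ^ n) * (ennreal K * Y + ennreal (K * (2 ^ n + 2) + 1) * T)"
      using dyadic by (rule mult_left_mono) simp
    also have "\<dots> = ennreal (2 ^ n * K) * Y + ennreal (2 ^ n * (K * (2 ^ n + 2) + 1)) * T"
    proof -
      have m1: "ennreal (2 ^ n * K) = ennreal (2 ^ n) * ennreal K"
        using K by (intro ennreal_mult) auto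
      have m2: "ennreal (2 ^ n * (K * (2 ^ n + 2) + 1)) = ennreal (2 ^ n) * ennreal (K * (2 ^ n + 2) + 1)"
        using K by (intro ennreal_mult) auto
      show ?thesis unfolding m1 m2 by (simp only: distrib_left mult.assoc)
    qed
    also have "\<dots> \<le> ?R"
      unfolding n_def T_def by (intro add_right_mono mult_right_mono ennreal_leI) auto
    finally show ?thesis .
  qed
  then show ?thesis unfolding maximal_eq_SUP_ball_avg by (intro SUP_least) auto
qed

end

section \<open>Large balls\<close>

lemma young_linear_bound:
  fixes p l t :: real
  assumes p: "p > 1" and l: "l > 0" and t: "t \<ge> 0"
  shows "t \<le> t powr p / (p * l powr (p - 1)) + l"
proof (cases "t = 0")
  case True then show ?thesis using l p by simp
next
  case False
  then have t0: "t > 0" using t by simp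
  define a where "a = t powr p / l powr (p - 1)"
  have a0: "a > 0" unfolding a_def using t0 l by simp
  have "a powr (1/p) = (t powr p) powr (1/p) / (l powr (p - 1)) powr (1/p)"
    unfolding a_def using t0 l by (simp add: powr_divide)
  also have "(t powr p) powr (1/p) = t" using p t0 by (simp add: powr_powr)
  also have "(l powr (p - 1)) powr (1/p) = l powr ((p - 1) / p)" using l by (simp add: powr_powr)
  finally have ap: "a powr (1/p) = t / l powr ((p - 1) / p)" .
  have lp: "l powr (1 - 1/p) = l powr ((p - 1) / p)" using p by (simp add: diff_divide_distrib)
  have "a powr (1/p) * l powr (1 - 1/p) \<le> (1/p) * a + (1 - 1/p) * l"
    using p a0 l by (intro Youngs_inequality_0) auto
  moreover have "a powr (1/p) * l powr (1 - 1/p) = t" unfolding ap lp using l by simp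
  moreover have "(1/p) * a = t powr p / (p * l powr (p - 1))" unfolding a_def by simp
  moreover have "(1 - 1/p) * l \<le> l" using p l by (simp add: field_simps)
  ultimately show ?thesis by linarith
qed

lemma young_remainder_le:
  fixes p l A :: real
  assumes p: "p > 1" and l: "l > 0" and A: "0 \<le> A" "A \<le> l powr p"
  shows "A / (p * l powr (p - 1)) \<le> l"
proof -
  have lp: "l powr p = l powr (p - 1) * l"
    using powr_add[of l "p - 1" 1] l by simp
  have "A / (p * l powr (p - 1)) \<le> l powr p / (p * l powr (p - 1))"
    using A p l by (intro divide_right_mono) auto
  also have "\<dots> = l / p" using l p unfolding lp by (simp add: field_simps)
  also have "\<dots> \<le> l" using l p by (simp add: field_simps)
  finally show ?thesis .
qed

lemma integrable_on_ball_if_Lp: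
  fixes f :: "'a::euclidean_space \<Rightarrow> real"
  assumes p: "p > 1" and f: "in_Lp p f" and r: "r > 0"
  shows "integrable (lebesgue_on (ball c r)) f"
proof -
  have fm: "f \<in> borel_measurable lebesgue" and fi: "integrable lebesgue (\<lambda>x. \<bar>f x\<bar> powr p)"
    using f by (auto simp: in_Lp_def)
  have bound: "\<bar>f x\<bar> \<le> \<bar>f x\<bar> powr p + 1" for x
  proof -
    have "\<bar>f x\<bar> \<le> \<bar>f x\<bar> powr p / (p * 1 powr (p - 1)) + 1" by (rule young_linear_bound[OF p]) auto
    also have "\<dots> \<le> \<bar>f x\<bar> powr p + 1"
    proof -
      have "\<bar>f x\<bar> powr p \<le> p * \<bar>f x\<bar> powr p" using p by (intro mult_le_cancel_right1[THEN iffD2]) auto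
      then show ?thesis using p by (simp add: field_simps)
    qed
    finally show ?thesis .
  qed
  have "integrable lebesgue (\<lambda>x. indicator (ball c r) x *\<^sub>R f x)"
  proof (rule Bochner_Integration.integrable_bound[of _ "\<lambda>x. indicator (ball c r) x * 1 + \<bar>f x\<bar> powr p"])
    show "integrable lebesgue (\<lambda>x. indicator (ball c r) x * 1 + \<bar>f x\<bar> powr p)"
      using fi emeasure_lebesgue_ball[of c r]
      by (intro Bochner_Integration.integrable_add integrable_real_mult_indicator) auto
    show "(\<lambda>x. indicator (ball c r) x *\<^sub>R f x) \<in> borel_measurable lebesgue"
      using fm by (intro borel_measurable_scaleR borel_measurable_indicator) auto
    show "AE x in lebesgue. norm (indicator (ball c r) x *\<^sub>R f x) \<le> norm (indicator (ball c r) x * 1 + \<bar>f x\<bar> powr p)"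
      using bound by (intro AE_I2) (auto simp: indicator_def add.commute)
  qed
  then show ?thesis by (subst integrable_restrict_space) auto
qed

lemma nn_set_integral_abs_le_young:
  fixes f :: "'a::euclidean_space \<Rightarrow> real"
  assumes p: "p > 1" and f: "in_Lp p f" and l: "l > 0" and A[measurable]: "A \<in> sets lebesgue"
  shows "(\<integral>\<^sup>+y\<in>A. ennreal \<bar>f y\<bar> \<partial>lebesgue)
    \<le> ennreal ((\<integral>y. \<bar>f y\<bar> powr p \<partial>lebesgue) / (p * l powr (p - 1))) + ennreal l * emeasure lebesgue A"
proof -
  define c where "c = p * l powr (p - 1)"
  have c: "c > 0" unfolding c_def using p l by simp
  have fm[measurable]: "f \<in> borel_measurable lebesgue" and fi: "integrable lebesgue (\<lambda>x. \<bar>f x\<bar> powr p)"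
    using f by (auto simp: in_Lp_def)
  have "(\<integral>\<^sup>+y\<in>A. ennreal \<bar>f y\<bar> \<partial>lebesgue)
      \<le> (\<integral>\<^sup>+y. ennreal (\<bar>f y\<bar> powr p / c) * indicator A y + ennreal l * indicator A y \<partial>lebesgue)"
  proof (intro nn_integral_mono)
    fix y
    have "ennreal \<bar>f y\<bar> \<le> ennreal (\<bar>f y\<bar> powr p / c) + ennreal l"
      using young_linear_bound[OF p l abs_ge_zero, of "f y"] c l
      by (simp add: c_def ennreal_leI flip: ennreal_plus)
    then show "ennreal \<bar>f y\<bar> * indicator A y \<le> ennreal (\<bar>f y\<bar> powr p / c) * indicator A y + ennreal l * indicator A y"
      by (auto simp: indicator_def)
  qed
  also have "\<dots> = (\<integral>\<^sup>+y\<in>A. ennreal (\<bar>f y\<bar> powr p / c) \<partial>lebesgue) + ennreal l * emeasure lebesgue A"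
    by (subst nn_integral_add) (simp_all add: nn_integral_cmult_indicator)
  finally have split: "(\<integral>\<^sup>+y\<in>A. ennreal \<bar>f y\<bar> \<partial>lebesgue)
      \<le> (\<integral>\<^sup>+y\<in>A. ennreal (\<bar>f y\<bar> powr p / c) \<partial>lebesgue) + ennreal l * emeasure lebesgue A" .
  have "(\<integral>\<^sup>+y\<in>A. ennreal (\<bar>f y\<bar> powr p / c) \<partial>lebesgue) \<le> (\<integral>\<^sup>+y. ennreal (\<bar>f y\<bar> powr p / c) \<partial>lebesgue)"
    by (intro nn_integral_mono) (simp add: indicator_def)
  also have "\<dots> = ennreal ((\<integral>y. \<bar>f y\<bar> powr p \<partial>lebesgue) / c)"
    using fi c by (subst nn_integral_eq_integral) auto
  finally have "(\<integral>\<^sup>+y\<in>A. ennreal (\<bar>f y\<bar> powr p / c) \<partial>lebesgue) \<le> ennreal ((\<integral>y. \<bar>f y\<bar> powr p \<partial>lebesgue) / c)" .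
  from order_trans[OF split add_right_mono[OF this]] show ?thesis unfolding c_def .
qed

lemma ball_avg_le_Lp_norm:
  fixes f :: "'a::euclidean_space \<Rightarrow> real"
  assumes p: "p > 1" and f: "in_Lp p f" and r: "r \<ge> 1" and \<epsilon>: "\<epsilon> > 0"
  shows "ball_avg f x r \<le> ennreal (2 * measure lebesgue (ball (0::'a) 1) powr (- 1 / p) * (Lp_norm p f + \<epsilon>))"
proof -
  define V1 where "V1 = measure lebesgue (ball (0::'a) 1)"
  define NF where "NF = (\<integral>y. \<bar>f y\<bar> powr p \<partial>lebesgue)"
  define l where "l = V1 powr (- 1 / p) * (NF powr (1 / p) + \<epsilon>)"
  define c where "c = p * l powr (p - 1)"
  define m where "m = measure lebesgue (ball x r)"
  have V1: "V1 > 0" unfolding V1_def by (rule measure_lebesgue_ball_pos) simp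
  have NF: "NF \<ge> 0" unfolding NF_def by (intro integral_nonneg_AE) auto
  have l: "l > 0" unfolding l_def using V1 \<epsilon> by (intro mult_pos_pos add_nonneg_pos) auto
  have c: "c > 0" unfolding c_def using p l by simp
  have "m = r ^ DIM('a) * V1" unfolding m_def V1_def using r by (intro measure_lebesgue_ball) simp
  moreover have "1 * V1 \<le> r ^ DIM('a) * V1" using V1 r by (intro mult_right_mono one_le_power) auto
  ultimately have m: "V1 \<le> m" by simp
  have "ball_avg f x r = ennreal (1 / m) * (\<integral>\<^sup>+y\<in>ball x r. ennreal \<bar>f y\<bar> \<partial>lebesgue)"
    unfolding m_def using r by (intro ball_avg_eq) simp
  also have "\<dots> \<le> ennreal (1 / m) * (ennreal (NF / c) + ennreal l * ennreal m)"
    using nn_set_integral_abs_le_young[OF p f l, of "ball x r"]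
    by (intro mult_left_mono) (simp_all add: NF_def c_def m_def emeasure_lebesgue_ball)
  also have "\<dots> = ennreal (NF / (c * m) + l)"
    using V1 m NF c l by (simp add: ennreal_mult''[symmetric] field_simps flip: ennreal_plus)
  also have "\<dots> \<le> ennreal (2 * l)"
  proof (intro ennreal_leI)
    have "NF / V1 \<le> l powr p"
    proof -
      have "NF = (NF powr (1/p)) powr p" using p NF by (simp add: powr_powr)
      also have "\<dots> \<le> (NF powr (1/p) + \<epsilon>) powr p" using \<epsilon> p by (intro powr_mono2) auto
      also have "\<dots> = V1 * l powr p"
      proof -
        have "(V1 powr (- 1 / p)) powr p = V1 powr (- 1 / p * p)" by (rule powr_powr)
        also have "- 1 / p * p = - 1" using p by simp
        finally have "(V1 powr (- 1 / p)) powr p = inverse V1" using V1 by (simp add: powr_minus)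
        then have "l powr p = inverse V1 * (NF powr (1/p) + \<epsilon>) powr p"
          unfolding l_def using V1 \<epsilon> by (simp add: powr_mult)
        then show ?thesis using V1 by simp
      qed
      finally show ?thesis using V1 by (simp add: field_simps)
    qed
    then have "NF / V1 / c \<le> l" unfolding c_def using NF V1 by (intro young_remainder_le[OF p l]) auto
    moreover have "NF / (c * m) \<le> NF / V1 / c"
      using NF c V1 m by (simp add: divide_left_mono mult_mono field_simps)
    ultimately show "NF / (c * m) + l \<le> 2 * l" by simp
  qed
  finally show ?thesis by (simp add: l_def V1_def NF_def Lp_norm_def mult.assoc)
qed

section \<open>Integrating the oscillations against mu\<close>

lemma emeasure_ball_le_cs:
  assumes "\<rho> > 0"
  shows "emeasure \<mu> (ball y \<rho>) \<le> cs s \<mu> * ennreal (\<rho> powr s)"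
proof -
  have t: "\<rho> powr s > 0" using assms by simp
  have "emeasure \<mu> (ball y \<rho>) / ennreal (\<rho> powr s) \<le> cs s \<mu>"
    unfolding cs_def by (rule SUP_upper2[of "(y, \<rho>)"]) (use assms in auto)
  then have "emeasure \<mu> (ball y \<rho>) / ennreal (\<rho> powr s) * ennreal (\<rho> powr s) \<le> cs s \<mu> * ennreal (\<rho> powr s)"
    by (rule mult_right_mono) simp
  moreover have "emeasure \<mu> (ball y \<rho>) / ennreal (\<rho> powr s) * ennreal (\<rho> powr s) = emeasure \<mu> (ball y \<rho>)"
  proof -
    have "ennreal (1 / \<rho> powr s) * ennreal (\<rho> powr s) = 1" using t by (simp add: ennreal_mult''[symmetric])
    then show ?thesis using t by (simp add: divide_ennreal_def inverse_ennreal divide_inverse mult.assoc)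
  qed
  ultimately show ?thesis by simp
qed

lemma osc_avg_le_sharp_max:
  fixes f :: "'a::euclidean_space \<Rightarrow> real"
  assumes \<rho>: "\<rho> > 0" and y: "y \<in> ball x \<rho>"
  shows "osc_avg (nat \<lfloor>\<alpha>\<rfloor>) f x \<rho> \<le> ennreal (measure lebesgue (ball x \<rho>) powr (\<alpha> / DIM('a))) * sharp_max \<alpha> f y"
proof -
  define m where "m = measure lebesgue (ball x \<rho>)"
  define D where "D = (\<integral>\<^sup>+z\<in>ball x \<rho>. ennreal \<bar>f z - poly_proj (nat \<lfloor>\<alpha>\<rfloor>) (ball x \<rho>) f z\<bar> \<partial>lebesgue)"
  have m: "m > 0" unfolding m_def using \<rho> by (rule measure_lebesgue_ball_pos)
  have sharp: "ennreal (m powr (- \<alpha> / DIM('a)) / m) * D \<le> sharp_max \<alpha> f y"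
    unfolding sharp_max_def m_def D_def by (rule SUP_upper2[of "(x, \<rho>)"]) (use y \<rho> in auto)
  have inv_m: "1 / m = m powr (\<alpha> / DIM('a)) * (m powr (- \<alpha> / DIM('a)) / m)"
    using m by (simp add: powr_minus field_simps)
  have "ennreal (1 / m) = ennreal (m powr (\<alpha> / DIM('a))) * ennreal (m powr (- \<alpha> / DIM('a)) / m)"
    unfolding inv_m by (rule ennreal_mult) (use m in auto)
  then have "osc_avg (nat \<lfloor>\<alpha>\<rfloor>) f x \<rho> = ennreal (m powr (\<alpha> / DIM('a))) * (ennreal (m powr (- \<alpha> / DIM('a)) / m) * D)"
    unfolding osc_avg_def ball_avg_eq[OF \<rho>] m_def[symmetric] D_def[symmetric] by (simp only: mult.assoc)
  also have "\<dots> \<le> ennreal (m powr (\<alpha> / DIM('a))) * sharp_max \<alpha> f y" using sharp by (rule mult_left_mono) simp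
  finally show ?thesis unfolding m_def .
qed

lemma le_avg_if_AE_le:
  assumes A: "A \<in> sets M" "emeasure M A = ennreal m" and m: "m > 0"
    and le: "AE y in M. y \<in> A \<longrightarrow> a \<le> h y"
  shows "a \<le> ennreal (1 / m) * (\<integral>\<^sup>+y\<in>A. h y \<partial>M)"
proof -
  have "a * ennreal m = (\<integral>\<^sup>+y\<in>A. a \<partial>M)" using A by (simp add: nn_integral_cmult_indicator)
  also have "\<dots> \<le> (\<integral>\<^sup>+y\<in>A. h y \<partial>M)"
    using le by (intro nn_integral_mono_AE) (auto simp: indicator_def)
  finally have le_m: "a * ennreal m \<le> (\<integral>\<^sup>+y\<in>A. h y \<partial>M)" .
  have "a = a * ennreal m * ennreal (1 / m)" using m by (simp add: mult.assoc ennreal_mult''[symmetric])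
  also have "\<dots> \<le> (\<integral>\<^sup>+y\<in>A. h y \<partial>M) * ennreal (1 / m)" using le_m by (rule mult_right_mono) simp
  finally show ?thesis by (simp add: mult.commute)
qed

text \<open>Averaging the pointwise bound by f^sharp_alpha over B(x,rho) and linearising with Young.\<close>
lemma osc_avg_le_young:
  fixes f G :: "'a::euclidean_space \<Rightarrow> real" and x :: 'a and \<rho> :: real
  defines "m \<equiv> measure lebesgue (ball x \<rho>)"
  assumes p: "p > 1" and \<rho>: "\<rho> > 0" and l: "l > 0"
    and finite: "AE y in lebesgue. sharp_max \<alpha> f y < \<infinity>"
    and G[measurable]: "G \<in> borel_measurable borel" and G_nonneg: "\<And>y. G y \<ge> 0"
    and G_eq: "AE y in lebesgue. G y = enn2real (sharp_max \<alpha> f y) powr p"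
  shows "osc_avg (nat \<lfloor>\<alpha>\<rfloor>) f x \<rho> \<le> ennreal (m powr (\<alpha> / DIM('a)) / m) *
    (ennreal (1 / (p * l powr (p - 1))) * (\<integral>\<^sup>+y. ennreal (G y) * indicator (ball x \<rho>) y \<partial>lborel)
      + ennreal (l * m))"
proof -
  define c where "c = p * l powr (p - 1)"
  define w where "w = m powr (\<alpha> / DIM('a))"
  have c: "c > 0" unfolding c_def using p l by simp
  have m: "m > 0" unfolding m_def using \<rho> by (rule measure_lebesgue_ball_pos)
  have "AE y in lebesgue. y \<in> ball x \<rho> \<longrightarrow> osc_avg (nat \<lfloor>\<alpha>\<rfloor>) f x \<rho> \<le> ennreal w * ennreal (G y / c + l)"
    using finite G_eq
  proof eventually_elim
    case (elim y)
    show ?case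
    proof
      assume y: "y \<in> ball x \<rho>"
      have "sharp_max \<alpha> f y = ennreal (enn2real (sharp_max \<alpha> f y))" using elim(1) by simp
      also have "\<dots> \<le> ennreal (G y / c + l)"
        using young_linear_bound[OF p l, of "enn2real (sharp_max \<alpha> f y)"] elim(2)
        by (intro ennreal_leI) (simp add: c_def)
      finally have sharp: "sharp_max \<alpha> f y \<le> ennreal (G y / c + l)" .
      have "osc_avg (nat \<lfloor>\<alpha>\<rfloor>) f x \<rho> \<le> ennreal w * sharp_max \<alpha> f y"
        using osc_avg_le_sharp_max[OF \<rho> y] unfolding w_def m_def .
      also have "\<dots> \<le> ennreal w * ennreal (G y / c + l)" using sharp by (rule mult_left_mono) simp
      finally show "osc_avg (nat \<lfloor>\<alpha>\<rfloor>) f x \<rho> \<le> ennreal w * ennreal (G y / c + l)" .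
    qed
  qed
  then have "osc_avg (nat \<lfloor>\<alpha>\<rfloor>) f x \<rho> \<le> ennreal (1 / m) * (\<integral>\<^sup>+y\<in>ball x \<rho>. ennreal w * ennreal (G y / c + l) \<partial>lebesgue)"
    using m by (intro le_avg_if_AE_le) (simp_all add: m_def emeasure_lebesgue_ball)
  also have "(\<integral>\<^sup>+y\<in>ball x \<rho>. ennreal w * ennreal (G y / c + l) \<partial>lebesgue)
      = ennreal w * (ennreal (1 / c) * (\<integral>\<^sup>+y. ennreal (G y) * indicator (ball x \<rho>) y \<partial>lborel) + ennreal (l * m))"
  proof -
    have [measurable]: "ball x \<rho> \<in> sets borel" by simp
    have "(\<integral>\<^sup>+y\<in>ball x \<rho>. ennreal w * ennreal (G y / c + l) \<partial>lebesgue)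
        = (\<integral>\<^sup>+y. ennreal w * (ennreal (1 / c) * (ennreal (G y) * indicator (ball x \<rho>) y) + ennreal l * indicator (ball x \<rho>) y) \<partial>lborel)"
      using c l G_nonneg
      by (subst nn_integral_completion) (auto intro!: nn_integral_cong simp: indicator_def ennreal_mult''[symmetric] divide_inverse mult.commute simp flip: ennreal_plus)
    also have "\<dots> = ennreal w * (ennreal (1 / c) * (\<integral>\<^sup>+y. ennreal (G y) * indicator (ball x \<rho>) y \<partial>lborel) + ennreal l * emeasure lborel (ball x \<rho>))"
      by (simp add: nn_integral_cmult nn_integral_add nn_integral_cmult_indicator)
    also have "emeasure lborel (ball x \<rho>) = ennreal m"
      using emeasure_lebesgue_ball[of x \<rho>] by (simp add: m_def emeasure_completion)
    finally show ?thesis using l m by (simp add: ennreal_mult)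
  qed
  also have "ennreal (1 / m) * (ennreal w * (ennreal (1 / c) * (\<integral>\<^sup>+y. ennreal (G y) * indicator (ball x \<rho>) y \<partial>lborel) + ennreal (l * m)))
      = ennreal (w / m) * (ennreal (1 / c) * (\<integral>\<^sup>+y. ennreal (G y) * indicator (ball x \<rho>) y \<partial>lborel) + ennreal (l * m))"
    using m by (simp add: w_def mult.assoc[symmetric] ennreal_mult''[symmetric])
  finally show ?thesis unfolding w_def c_def .
qed

lemma nn_integral_ball_integral_le:
  fixes \<mu> :: "'a::euclidean_space measure" and Gb :: "'a \<Rightarrow> real"
  assumes sets_mu: "sets \<mu> = sets borel" and sf: "sigma_finite_measure \<mu>"
    and Gb: "Gb \<in> borel_measurable borel" and \<rho>: "\<rho> > 0"
    and Cmu: "\<And>y. emeasure \<mu> (ball y \<rho>) \<le> C"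
  shows "(\<lambda>x. \<integral>\<^sup>+y. ennreal (Gb y) * indicator (ball x \<rho>) y \<partial>lborel) \<in> borel_measurable \<mu>"
    and "(\<integral>\<^sup>+x. (\<integral>\<^sup>+y. ennreal (Gb y) * indicator (ball x \<rho>) y \<partial>lborel) \<partial>\<mu>) \<le> C * (\<integral>\<^sup>+y. ennreal (Gb y) \<partial>lborel)"
proof -
  interpret \<mu>: sigma_finite_measure \<mu> by (rule sf)
  interpret pair_sigma_finite \<mu> lborel by unfold_locales
  define F where "F = (\<lambda>z::'a \<times> 'a. ennreal (Gb (snd z)) * indicator {z. dist (fst z) (snd z) < \<rho>} z)"
  have opn: "open {z::'a \<times> 'a. dist (fst z) (snd z) < \<rho>}"
    by (intro open_Collect_less continuous_intros)
  have sb: "{z::'a \<times> 'a. dist (fst z) (snd z) < \<rho>} \<in> sets borel" using opn by (rule borel_open)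
  have seq: "sets (\<mu> \<Otimes>\<^sub>M lborel) = sets (borel :: ('a \<times> 'a) measure)"
  proof -
    have "sets (\<mu> \<Otimes>\<^sub>M lborel) = sets (borel \<Otimes>\<^sub>M borel)"
      by (rule sets_pair_measure_cong) (simp_all add: sets_mu)
    then show ?thesis unfolding borel_prod .
  qed
  have [measurable]: "{z::'a \<times> 'a. dist (fst z) (snd z) < \<rho>} \<in> sets (\<mu> \<Otimes>\<^sub>M lborel)"
    using sb seq by simp
  have [measurable]: "Gb \<in> borel_measurable lborel" using Gb by simp
  have Fm: "F \<in> borel_measurable (\<mu> \<Otimes>\<^sub>M lborel)" unfolding F_def by measurable
  have Feq: "F (x, y) = ennreal (Gb y) * indicator (ball x \<rho>) y" for x y
    by (simp add: F_def indicator_def mem_ball)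
  have Fm': "(\<lambda>(x, y). ennreal (Gb y) * indicator (ball x \<rho>) y) \<in> borel_measurable (\<mu> \<Otimes>\<^sub>M lborel)"
    using Fm by (simp add: Feq[symmetric] case_prod_beta' cong: measurable_cong)
  show "(\<lambda>x. \<integral>\<^sup>+y. ennreal (Gb y) * indicator (ball x \<rho>) y \<partial>lborel) \<in> borel_measurable \<mu>"
    using lborel.borel_measurable_nn_integral_fst[OF Fm] by (simp add: Feq)
  have "(\<integral>\<^sup>+x. (\<integral>\<^sup>+y. ennreal (Gb y) * indicator (ball x \<rho>) y \<partial>lborel) \<partial>\<mu>)
      = (\<integral>\<^sup>+y. (\<integral>\<^sup>+x. ennreal (Gb y) * indicator (ball x \<rho>) y \<partial>\<mu>) \<partial>lborel)"
    by (rule Fubini'[OF Fm', symmetric])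
  also have "\<dots> = (\<integral>\<^sup>+y. ennreal (Gb y) * emeasure \<mu> (ball y \<rho>) \<partial>lborel)"
  proof (intro nn_integral_cong)
    fix y
    have "(\<lambda>x. ennreal (Gb y) * indicator (ball x \<rho>) y) = (\<lambda>x. ennreal (Gb y) * indicator (ball y \<rho>) x)"
      by (intro ext) (simp add: indicator_def mem_ball dist_commute)
    then show "(\<integral>\<^sup>+x. ennreal (Gb y) * indicator (ball x \<rho>) y \<partial>\<mu>) = ennreal (Gb y) * emeasure \<mu> (ball y \<rho>)"
      using sets_mu by (simp add: nn_integral_cmult_indicator)
  qed
  also have "\<dots> \<le> (\<integral>\<^sup>+y. C * ennreal (Gb y) \<partial>lborel)"
  proof (intro nn_integral_mono)
    fix y
    have "ennreal (Gb y) * emeasure \<mu> (ball y \<rho>) \<le> ennreal (Gb y) * C" using Cmu[of y] by (rule mult_left_mono) simp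
    then show "ennreal (Gb y) * emeasure \<mu> (ball y \<rho>) \<le> C * ennreal (Gb y)" by (simp add: mult.commute)
  qed
  also have "\<dots> = C * (\<integral>\<^sup>+y. ennreal (Gb y) \<partial>lborel)"
    by (rule nn_integral_cmult) measurable
  finally show "(\<integral>\<^sup>+x. (\<integral>\<^sup>+y. ennreal (Gb y) * indicator (ball x \<rho>) y \<partial>lborel) \<partial>\<mu>) \<le> C * (\<integral>\<^sup>+y. ennreal (Gb y) \<partial>lborel)" .
qed


lemma half_pow_powr: "((1/2::real) ^ j) powr b = ((1/2) powr b) ^ j"
proof (induction j)
  case 0 then show ?case by simp
next
  case (Suc j)
  have "((1/2::real) ^ Suc j) powr b = ((1/2) * (1/2) ^ j) powr b" by simp
  also have "\<dots> = (1/2) powr b * ((1/2) ^ j) powr b" by (rule powr_mult)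
  finally show ?case using Suc by simp
qed

lemma osc_young_constant_le:
  fixes V1 \<rho> p csr NG \<Lambda> s \<alpha> :: real and n :: nat
  assumes V1: "V1 > 0" and \<rho>: "\<rho> > 0" and p: "p > 1" and csr: "csr \<ge> 0" and NG: "NG \<ge> 0"
    and \<Lambda>: "\<Lambda> > 0" "csr * NG / V1 \<le> \<Lambda> powr p" and n: "n > 0"
  defines "m \<equiv> \<rho> ^ n * V1"
  defines "l \<equiv> \<rho> powr ((s - real n) / p) * \<Lambda>"
  defines "c \<equiv> p * l powr (p - 1)"
  defines "w \<equiv> m powr (\<alpha> / real n)"
  shows "(w / m) * (csr * \<rho> powr s * NG / c + l * m) \<le> 2 * V1 powr (\<alpha> / real n) * \<Lambda> * \<rho> powr (\<alpha> + (s - real n) / p)"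
proof -
  have m: "m > 0" unfolding m_def using V1 \<rho> by simp
  have l: "l > 0" unfolding l_def using \<rho> \<Lambda> by simp
  have w: "w > 0" unfolding w_def using m by simp
  have c: "c > 0" unfolding c_def using p l by simp
  define X where "X = csr * \<rho> powr s * NG"
  have X: "X \<ge> 0" unfolding X_def using csr NG by simp
  have "X / m \<le> l powr p"
  proof -
    have rn: "\<rho> ^ n = \<rho> powr real n" using \<rho> by (simp add: powr_realpow)
    have "X / m = \<rho> powr (s - real n) * (csr * NG / V1)"
      unfolding X_def m_def rn using \<rho> V1 by (simp add: powr_diff field_simps)
    also have "\<dots> \<le> \<rho> powr (s - real n) * \<Lambda> powr p" using \<Lambda> by (intro mult_left_mono) auto
    also have "\<dots> = l powr p"
    proof -
      have "(\<rho> powr ((s - real n) / p)) powr p = \<rho> powr (s - real n)" using p by (simp add: powr_powr)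
      then show ?thesis unfolding l_def using \<rho> \<Lambda> by (simp add: powr_mult)
    qed
    finally show ?thesis .
  qed
  then have Xc: "(X / m) / c \<le> l" unfolding c_def using X m by (intro young_remainder_le[OF p l]) auto
  have "(w / m) * (X / c + l * m) = w * ((X / m) / c + l)" using m c by (simp add: field_simps)
  also have "\<dots> \<le> w * (2 * l)" using Xc w by (intro mult_left_mono) auto
  also have "w * (2 * l) = 2 * V1 powr (\<alpha> / real n) * \<Lambda> * \<rho> powr (\<alpha> + (s - real n) / p)"
  proof -
    have "w = (\<rho> ^ n) powr (\<alpha> / real n) * V1 powr (\<alpha> / real n)" unfolding w_def m_def
      using \<rho> V1 by (simp add: powr_mult)
    also have "(\<rho> ^ n) powr (\<alpha> / real n) = \<rho> powr \<alpha>"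
      using \<rho> n by (simp add: powr_realpow[symmetric] powr_powr)
    finally have "w = \<rho> powr \<alpha> * V1 powr (\<alpha> / real n)" .
    then show ?thesis unfolding l_def using \<rho> by (simp add: powr_add mult_ac)
  qed
  finally show ?thesis unfolding X_def .
qed

lemma exists_osc_avg_majorant:
  fixes f G :: "'a::euclidean_space \<Rightarrow> real" and \<mu> :: "'a measure"
  defines "n \<equiv> DIM('a)" and "V1 \<equiv> measure lebesgue (ball (0::'a) 1)"
  assumes p: "p > 1" and \<mu>: "prob_space \<mu>" "sets \<mu> = sets borel" and cs: "cs s \<mu> = ennreal c" "c \<ge> 0"
    and finite: "AE y in lebesgue. sharp_max \<alpha> f y < \<infinity>"
    and G: "G \<in> borel_measurable borel" "\<And>y. G y \<ge> 0" "AE y in lebesgue. G y = enn2real (sharp_max \<alpha> f y) powr p"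
    and NG: "(\<integral>\<^sup>+y. ennreal (G y) \<partial>lborel) = ennreal NG" "NG \<ge> 0"
    and \<Lambda>: "\<Lambda> > 0" "c * NG / V1 \<le> \<Lambda> powr p" and \<rho>: "\<rho> > 0"
  shows "\<exists>Z\<in>borel_measurable \<mu>. (\<forall>x. osc_avg (nat \<lfloor>\<alpha>\<rfloor>) f x \<rho> \<le> Z x) \<and>
    (\<integral>\<^sup>+x. Z x \<partial>\<mu>) \<le> ennreal (2 * V1 powr (\<alpha> / n) * \<Lambda> * \<rho> powr (\<alpha> + (s - n) / p))"
proof -
  interpret prob_space \<mu> by (rule \<mu>(1))
  define m where "m = \<rho> ^ n * V1"
  define l where "l = \<rho> powr ((s - n) / p) * \<Lambda>"
  define W where "W x = (\<integral>\<^sup>+y. ennreal (G y) * indicator (ball x \<rho>) y \<partial>lborel)" for x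
  define Z where "Z x = ennreal (m powr (\<alpha> / n) / m) * (ennreal (1 / (p * l powr (p - 1))) * W x + ennreal (l * m))" for x
  have V1: "V1 > 0" unfolding V1_def by (rule measure_lebesgue_ball_pos) simp
  have m: "m > 0" unfolding m_def using V1 \<rho> by simp
  have l: "l > 0" unfolding l_def using \<rho> \<Lambda> by simp
  have ball_m: "measure lebesgue (ball x \<rho>) = m" for x :: 'a
    by (simp only: m_def V1_def n_def measure_lebesgue_ball[OF less_imp_le[OF \<rho>]])
  have osc_le: "osc_avg (nat \<lfloor>\<alpha>\<rfloor>) f x \<rho> \<le> Z x" for x
    using osc_avg_le_young[OF p \<rho> l finite G, of x] unfolding ball_m Z_def W_def n_def .
  have W_int: "W \<in> borel_measurable \<mu>" "(\<integral>\<^sup>+x. W x \<partial>\<mu>) \<le> cs s \<mu> * ennreal (\<rho> powr s) * ennreal NG"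
    using nn_integral_ball_integral_le[OF \<mu>(2) _ G(1) \<rho>, of "cs s \<mu> * ennreal (\<rho> powr s)"]
      emeasure_ball_le_cs[OF \<rho>] NG(1) unfolding W_def by (auto intro: sigma_finite_measure)
  have Z_meas: "Z \<in> borel_measurable \<mu>" unfolding Z_def using W_int(1) by measurable
  have "(\<integral>\<^sup>+x. Z x \<partial>\<mu>) = ennreal (m powr (\<alpha> / n) / m) *
      (ennreal (1 / (p * l powr (p - 1))) * (\<integral>\<^sup>+x. W x \<partial>\<mu>) + ennreal (l * m))"
    unfolding Z_def using W_int(1) by (simp add: nn_integral_cmult nn_integral_add emeasure_space_1)
  also have "\<dots> \<le> ennreal (m powr (\<alpha> / n) / m) *
      (ennreal (1 / (p * l powr (p - 1))) * ennreal (c * \<rho> powr s * NG) + ennreal (l * m))"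
    using W_int(2) cs NG(2) by (intro mult_left_mono add_right_mono) (auto simp: ennreal_mult)
  also have "\<dots> = ennreal ((m powr (\<alpha> / n) / m) * (c * \<rho> powr s * NG / (p * l powr (p - 1)) + l * m))"
    using m l p cs(2) NG(2)
    by (simp add: ennreal_mult''[symmetric] divide_inverse mult_ac flip: ennreal_plus)
  also have "\<dots> \<le> ennreal (2 * V1 powr (\<alpha> / n) * \<Lambda> * \<rho> powr (\<alpha> + (s - n) / p))"
    unfolding m_def l_def n_def
    by (intro ennreal_leI osc_young_constant_le[OF V1 \<rho> p cs(2) NG(2) \<Lambda>]) simp
  finally show ?thesis using Z_meas osc_le by blast
qed

lemma exists_borel_nonneg_AE_eq:
  fixes u :: "'a::euclidean_space \<Rightarrow> real"
  assumes u: "u \<in> borel_measurable lebesgue" and nonneg: "\<And>x. u x \<ge> 0"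
  obtains v where "v \<in> borel_measurable borel" "\<And>x. v x \<ge> 0" "AE x in lebesgue. v x = u x"
proof -
  obtain v' where v': "v' \<in> borel_measurable lborel" and ae: "AE x in lborel. u x = v' x"
    using completion_ex_borel_measurable_real[OF u] by blast
  define v where "v = (\<lambda>x. max (v' x) 0)"
  have [measurable]: "v' \<in> borel_measurable borel" using v' by simp
  have "v \<in> borel_measurable borel" unfolding v_def by measurable
  moreover have "AE x in lebesgue. v x = u x"
    using AE_completion[OF ae] by eventually_elim (metis nonneg v_def max.absorb1)
  ultimately show ?thesis by (intro that) (auto simp: v_def)
qed

lemma dyadic_ratio_lt_1:
  fixes p s \<alpha> :: real
  assumes p: "p > 1" and s: "s > n - \<alpha> * p"
  shows "(1/2) powr (\<alpha> + (s - n) / p) < 1"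
proof -
  have "\<alpha> + (s - n) / p > 0" using s p by (simp add: field_simps)
  from powr_less_mono2[OF this, of "1/2" 1] show ?thesis by simp
qed

lemma exists_borel_Lp_power:
  fixes g :: "'a::euclidean_space \<Rightarrow> real"
  assumes g: "in_Lp p g"
  obtains G where "G \<in> borel_measurable borel" "\<And>y. G y \<ge> 0" "AE y in lebesgue. G y = \<bar>g y\<bar> powr p"
    "(\<integral>\<^sup>+y. ennreal (G y) \<partial>lborel) = ennreal (\<integral>y. \<bar>g y\<bar> powr p \<partial>lebesgue)"
proof -
  have meas: "(\<lambda>x. \<bar>g x\<bar> powr p) \<in> borel_measurable lebesgue"
    and int: "integrable lebesgue (\<lambda>x. \<bar>g x\<bar> powr p)" using g by (auto simp: in_Lp_def)
  obtain G where G: "G \<in> borel_measurable borel" "\<And>y. G y \<ge> 0" and ae: "AE y in lebesgue. G y = \<bar>g y\<bar> powr p"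
    using exists_borel_nonneg_AE_eq[OF meas] by auto
  have "(\<integral>\<^sup>+y. ennreal (G y) \<partial>lborel) = (\<integral>\<^sup>+y. ennreal (\<bar>g y\<bar> powr p) \<partial>lebesgue)"
    using G ae by (subst nn_integral_completion[symmetric]) (auto intro: nn_integral_cong_AE)
  also have "\<dots> = ennreal (\<integral>y. \<bar>g y\<bar> powr p \<partial>lebesgue)"
    using int by (intro nn_integral_eq_integral) auto
  finally show ?thesis using G ae that by blast
qed

lemma mult_div_le_powr_root_add:
  fixes c V N p \<epsilon> :: real
  assumes c: "c \<ge> 0" and V: "V > 0" and p: "p > 1" and N: "N \<ge> 0" and \<epsilon>: "\<epsilon> > 0"
  shows "c * N / V \<le> (((c + 1) / V) powr (1 / p) * (N powr (1 / p) + \<epsilon>)) powr p"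
proof -
  have "N = (N powr (1 / p)) powr p" using p N by (simp add: powr_powr)
  also have "\<dots> \<le> (N powr (1 / p) + \<epsilon>) powr p" using \<epsilon> p by (intro powr_mono2) auto
  finally have "c * N \<le> (c + 1) * (N powr (1 / p) + \<epsilon>) powr p" using c N by (intro mult_mono) auto
  then have "c * N / V \<le> (c + 1) / V * (N powr (1 / p) + \<epsilon>) powr p"
    using V by (simp add: divide_right_mono)
  also have "\<dots> = (((c + 1) / V) powr (1 / p) * (N powr (1 / p) + \<epsilon>)) powr p"
    using V p c \<epsilon> by (simp add: powr_mult powr_powr)
  finally show ?thesis .
qed

lemma nn_integral_suminf_le_geometric:
  fixes a q :: real
  assumes a: "a \<ge> 0" and Z: "\<And>j. Z j \<in> borel_measurable M" "\<And>j. (\<integral>\<^sup>+x. Z j x \<partial>M) \<le> ennreal (a * q ^ j)"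
    and q: "0 \<le> q" "q < 1"
  shows "(\<integral>\<^sup>+x. (\<Sum>j. Z j x) \<partial>M) \<le> ennreal (a / (1 - q))"
proof -
  have "(\<integral>\<^sup>+x. (\<Sum>j. Z j x) \<partial>M) = (\<Sum>j. \<integral>\<^sup>+x. Z j x \<partial>M)" using Z(1) by (rule nn_integral_suminf)
  also have "\<dots> \<le> (\<Sum>j. ennreal (a * q ^ j))" using Z(2) by (intro suminf_le) auto
  also have "\<dots> = ennreal (\<Sum>j. a * q ^ j)"
    using a q by (intro suminf_ennreal2 summable_mult summable_geometric) auto
  also have "(\<Sum>j. a * q ^ j) = a / (1 - q)"
    using q by (simp add: suminf_mult suminf_geometric summable_geometric divide_inverse)
  finally show ?thesis .
qed

lemma exists_sum_osc_avg_majorant: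
  fixes f :: "'a::euclidean_space \<Rightarrow> real" and \<mu> :: "'a measure" and p s \<alpha> \<epsilon> :: real
  defines "n \<equiv> DIM('a)" and "V1 \<equiv> measure lebesgue (ball (0::'a) 1)"
  defines "q \<equiv> (1/2) powr (\<alpha> + (s - n) / p)"
  assumes p: "p > 1" and s: "s > n - \<alpha> * p" and \<mu>: "Ms s \<mu>" and f: "in_Cp p \<alpha> f" and \<epsilon>: "\<epsilon> > 0"
  shows "\<exists>S\<in>borel_measurable \<mu>. (\<forall>x. (\<Sum>j. osc_avg (nat \<lfloor>\<alpha>\<rfloor>) f x ((1/2) ^ j)) \<le> S x) \<and>
    (\<integral>\<^sup>+x. S x \<partial>\<mu>) \<le> ennreal (2 * V1 powr (\<alpha> / n) * ((enn2real (cs s \<mu>) + 1) / V1) powr (1 / p)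
        * (Lp_norm p (\<lambda>x. enn2real (sharp_max \<alpha> f x)) + \<epsilon>) / (1 - q))"
proof -
  define c where "c = enn2real (cs s \<mu>)"
  define g where "g = (\<lambda>x. enn2real (sharp_max \<alpha> f x))"
  define NG where "NG = (\<integral>x. \<bar>g x\<bar> powr p \<partial>lebesgue)"
  define \<Lambda> where "\<Lambda> = ((c + 1) / V1) powr (1 / p) * (Lp_norm p g + \<epsilon>)"
  define a where "a = 2 * V1 powr (\<alpha> / n) * \<Lambda>"
  have prob: "prob_space \<mu>" and sets: "sets \<mu> = sets borel" and cs: "cs s \<mu> = ennreal c"
    using \<mu> by (auto simp: Ms_def c_def less_top)
  have V1: "V1 > 0" unfolding V1_def by (rule measure_lebesgue_ball_pos) simp
  have c: "c \<ge> 0" by (simp add: c_def)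
  have finite: "AE y in lebesgue. sharp_max \<alpha> f y < \<infinity>" and g: "in_Lp p g"
    using f by (auto simp: in_Cp_def in_Lp_enn_def g_def)
  obtain G where G: "G \<in> borel_measurable borel" "\<And>y. G y \<ge> 0" and G_ae: "AE y in lebesgue. G y = \<bar>g y\<bar> powr p"
    and NG: "(\<integral>\<^sup>+y. ennreal (G y) \<partial>lborel) = ennreal NG"
    using exists_borel_Lp_power[OF g] unfolding NG_def by blast
  have NG_nonneg: "NG \<ge> 0" unfolding NG_def by (intro integral_nonneg_AE) auto
  have G_eq: "AE y in lebesgue. G y = enn2real (sharp_max \<alpha> f y) powr p"
    using G_ae by (simp add: g_def)
  have \<Lambda>: "\<Lambda> > 0" "c * NG / V1 \<le> \<Lambda> powr p"
    unfolding \<Lambda>_def Lp_norm_def NG_def[symmetric] using c V1 p NG_nonneg \<epsilon>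
    by (auto intro!: mult_pos_pos add_nonneg_pos mult_div_le_powr_root_add)
  have q: "0 \<le> q" "q < 1" unfolding q_def n_def using dyadic_ratio_lt_1[OF p s[unfolded n_def]] by simp_all
  have "\<forall>j. \<exists>Z\<in>borel_measurable \<mu>. (\<forall>x. osc_avg (nat \<lfloor>\<alpha>\<rfloor>) f x ((1/2) ^ j) \<le> Z x) \<and>
      (\<integral>\<^sup>+x. Z x \<partial>\<mu>) \<le> ennreal (a * q ^ j)"
  proof
    fix j
    have "((1/2::real) ^ j) powr (\<alpha> + (s - n) / p) = q ^ j" unfolding q_def by (rule half_pow_powr)
    then show "\<exists>Z\<in>borel_measurable \<mu>. (\<forall>x. osc_avg (nat \<lfloor>\<alpha>\<rfloor>) f x ((1/2) ^ j) \<le> Z x) \<and>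
        (\<integral>\<^sup>+x. Z x \<partial>\<mu>) \<le> ennreal (a * q ^ j)"
      using exists_osc_avg_majorant[OF p prob sets cs c finite G G_eq NG NG_nonneg \<Lambda>(1)
          \<Lambda>(2)[unfolded V1_def], of "(1/2) ^ j"]
      unfolding a_def n_def V1_def by (simp add: mult.assoc)
  qed
  then obtain Z where Z: "\<And>j. Z j \<in> borel_measurable \<mu>" "\<And>j x. osc_avg (nat \<lfloor>\<alpha>\<rfloor>) f x ((1/2) ^ j) \<le> Z j x"
    "\<And>j. (\<integral>\<^sup>+x. Z j x \<partial>\<mu>) \<le> ennreal (a * q ^ j)"
    by metis
  have "a \<ge> 0" unfolding a_def using \<Lambda> V1 by simp
  then have "(\<integral>\<^sup>+x. (\<Sum>j. Z j x) \<partial>\<mu>) \<le> ennreal (a / (1 - q))"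
    using Z(1,3) q by (rule nn_integral_suminf_le_geometric)
  moreover have "(\<lambda>x. \<Sum>j. Z j x) \<in> borel_measurable \<mu>" using Z(1) by measurable
  moreover have "(\<Sum>j. osc_avg (nat \<lfloor>\<alpha>\<rfloor>) f x ((1/2) ^ j)) \<le> (\<Sum>j. Z j x)" for x
    using Z(2) by (intro suminf_le) auto
  moreover have "a / (1 - q) = 2 * V1 powr (\<alpha> / n) * ((enn2real (cs s \<mu>) + 1) / V1) powr (1 / p)
      * (Lp_norm p (\<lambda>x. enn2real (sharp_max \<alpha> f x)) + \<epsilon>) / (1 - q)"
    by (simp add: a_def \<Lambda>_def c_def g_def)
  ultimately show ?thesis by (intro bexI[of _ "\<lambda>x. \<Sum>j. Z j x"]) auto
qed

lemma nn_integral_maximal_le_eps: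
  fixes f :: "'a::euclidean_space \<Rightarrow> real" and \<mu> :: "'a measure" and p s \<alpha> K \<epsilon> :: real
  defines "n \<equiv> DIM('a)" and "V1 \<equiv> measure lebesgue (ball (0::'a) 1)"
  defines "q \<equiv> (1/2) powr (\<alpha> + (s - n) / p)"
  defines "A \<equiv> (2 ^ n * K + 1) * (2 * V1 powr (- 1 / p))"
    and "B \<equiv> \<lambda>t. 2 ^ n * (K * (2 ^ n + 2) + 1) * (2 * V1 powr (\<alpha> / n) * ((t + 1) / V1) powr (1 / p) / (1 - q))"
  assumes p: "p > 1" and s: "s > n - \<alpha> * p"
    and K: "K \<ge> 0" "\<And>Q c r y. Q \<in> polys (nat \<lfloor>\<alpha>\<rfloor>) \<Longrightarrow> 0 < r \<Longrightarrow> y \<in> ball c r \<Longrightarrow>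
      ennreal \<bar>Q y\<bar> \<le> ennreal K * ball_avg Q (c::'a) r"
    and \<mu>: "Ms s \<mu>" and f: "in_Cp p \<alpha> f" and \<epsilon>: "\<epsilon> > 0"
  shows "(\<integral>\<^sup>+x. maximal f x \<partial>\<mu>) \<le> ennreal (A * (Lp_norm p f + \<epsilon>)
    + B (enn2real (cs s \<mu>)) * (Lp_norm p (\<lambda>x. enn2real (sharp_max \<alpha> f x)) + \<epsilon>))"
proof -
  interpret prob_space \<mu> using \<mu> by (simp add: Ms_def)
  define c where "c = enn2real (cs s \<mu>)"
  define Nf where "Nf = Lp_norm p f"
  define Ng where "Ng = Lp_norm p (\<lambda>x. enn2real (sharp_max \<alpha> f x))"
  define C1 where "C1 = 2 ^ n * K + 1"
  define C2 where "C2 = 2 ^ n * (K * (2 ^ n + 2) + 1)"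
  define y where "y = 2 * V1 powr (- 1 / p) * (Nf + \<epsilon>)"
  define t where "t = 2 * V1 powr (\<alpha> / n) * ((c + 1) / V1) powr (1 / p) * (Ng + \<epsilon>) / (1 - q)"
  have q: "q < 1" unfolding q_def n_def using dyadic_ratio_lt_1[OF p s[unfolded n_def]] .
  have nonneg: "C1 \<ge> 0" "C2 \<ge> 0" "y \<ge> 0" "t \<ge> 0"
    using K(1) q \<epsilon> by (auto simp: C1_def C2_def y_def t_def c_def Nf_def Ng_def Lp_norm_def)
  have fLp: "in_Lp p f" using f by (simp add: in_Cp_def)
  have f_meas: "f \<in> borel_measurable lebesgue" using fLp by (simp add: in_Lp_def)
  obtain S where S: "S \<in> borel_measurable \<mu>" "\<And>x. (\<Sum>j. osc_avg (nat \<lfloor>\<alpha>\<rfloor>) f x ((1/2) ^ j)) \<le> S x"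
    "(\<integral>\<^sup>+x. S x \<partial>\<mu>) \<le> ennreal t"
    using exists_sum_osc_avg_majorant[OF p s[unfolded n_def] \<mu> f \<epsilon>]
    unfolding t_def c_def Ng_def n_def V1_def q_def by blast
  have "maximal f x \<le> ennreal C1 * ennreal y + ennreal C2 * (\<Sum>j. osc_avg (nat \<lfloor>\<alpha>\<rfloor>) f x ((1/2) ^ j))" for x
    unfolding C1_def C2_def n_def
  proof (rule maximal_le_dyadic_osc[OF f_meas integrable_on_ball_if_Lp[OF p fLp] K])
    show "ball_avg f x r \<le> ennreal y" if "1 \<le> r" for r
      unfolding y_def V1_def Nf_def using ball_avg_le_Lp_norm[OF p fLp that \<epsilon>] .
  qed
  also have "\<dots> x \<le> ennreal C1 * ennreal y + ennreal C2 * S x" for x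
    using S(2) by (intro add_left_mono mult_left_mono) auto
  finally have "(\<integral>\<^sup>+x. maximal f x \<partial>\<mu>) \<le> (\<integral>\<^sup>+x. ennreal C1 * ennreal y + ennreal C2 * S x \<partial>\<mu>)"
    by (intro nn_integral_mono)
  also have "\<dots> = ennreal C1 * ennreal y + ennreal C2 * (\<integral>\<^sup>+x. S x \<partial>\<mu>)"
    using S(1) by (simp add: nn_integral_add nn_integral_cmult emeasure_space_1)
  also have "\<dots> \<le> ennreal C1 * ennreal y + ennreal C2 * ennreal t"
    using S(3) by (intro add_left_mono mult_left_mono) auto
  also have "\<dots> = ennreal (C1 * y + C2 * t)"
    using nonneg by (simp add: ennreal_mult)
  also have "C1 * y + C2 * t = A * (Nf + \<epsilon>) + B c * (Ng + \<epsilon>)"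
    unfolding A_def B_def C1_def C2_def y_def t_def by (simp add: mult_ac)
  finally show ?thesis unfolding c_def Nf_def Ng_def .
qed

lemma ennreal_le_if_le_add_eps:
  assumes a: "a \<ge> 0" and b: "b \<ge> 0" and le: "\<And>\<epsilon>. \<epsilon> > 0 \<Longrightarrow> x \<le> ennreal (a + b * \<epsilon>)"
  shows "x \<le> ennreal a"
proof (rule ennreal_le_epsilon)
  fix e :: real assume e: "0 < e"
  have "x \<le> ennreal (a + b * (e / (b + 1)))" using e b by (intro le) simp
  also have "\<dots> \<le> ennreal (a + e)"
    using e b by (intro ennreal_leI add_left_mono) (simp add: field_simps)
  also have "\<dots> = ennreal a + ennreal e" using a e by simp
  finally show "x \<le> ennreal a + ennreal e" .
qed

lemma nn_integral_maximal_le: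
  fixes p s \<alpha> :: real
  assumes p: "p > 1" and s: "s > DIM('a::euclidean_space) - \<alpha> * p"
  obtains A B where "A \<ge> 0" "\<And>t. t \<ge> 0 \<Longrightarrow> B t \<ge> 0"
    "\<And>(\<mu> :: 'a measure) f. Ms s \<mu> \<Longrightarrow> in_Cp p \<alpha> f \<Longrightarrow> (\<integral>\<^sup>+x. maximal f x \<partial>\<mu>)
      \<le> ennreal (A * Lp_norm p f + B (enn2real (cs s \<mu>)) * Lp_norm p (\<lambda>x. enn2real (sharp_max \<alpha> f x)))"
proof -
  define n where "n = DIM('a)"
  define V1 where "V1 = measure lebesgue (ball (0::'a) 1)"
  define q where "q = (1/2::real) powr (\<alpha> + (s - n) / p)"
  obtain K where K: "K \<ge> 0" "\<And>Q c r y. Q \<in> polys (nat \<lfloor>\<alpha>\<rfloor>) \<Longrightarrow> 0 < r \<Longrightarrow> y \<in> ball c r \<Longrightarrow>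
      ennreal \<bar>Q y\<bar> \<le> ennreal K * ball_avg Q (c::'a) r"
    using polys_le_ball_avg[of "nat \<lfloor>\<alpha>\<rfloor>"] by blast
  define A where "A = (2 ^ n * K + 1) * (2 * V1 powr (- 1 / p))"
  define B where "B = (\<lambda>t. 2 ^ n * (K * (2 ^ n + 2) + 1) * (2 * V1 powr (\<alpha> / n) * ((t + 1) / V1) powr (1 / p) / (1 - q)))"
  have q: "q < 1" unfolding q_def n_def by (rule dyadic_ratio_lt_1[OF p s])
  have A: "A \<ge> 0" and B: "\<And>t. t \<ge> 0 \<Longrightarrow> B t \<ge> 0" using K(1) q by (auto simp: A_def B_def)
  have bound: "(\<integral>\<^sup>+x. maximal f x \<partial>\<mu>) \<le> ennreal (A * Lp_norm p f
      + B (enn2real (cs s \<mu>)) * Lp_norm p (\<lambda>x. enn2real (sharp_max \<alpha> f x)))"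
    if \<mu>: "Ms s \<mu>" and f: "in_Cp p \<alpha> f" for \<mu> :: "'a measure" and f
  proof (rule ennreal_le_if_le_add_eps)
    show "0 \<le> A * Lp_norm p f + B (enn2real (cs s \<mu>)) * Lp_norm p (\<lambda>x. enn2real (sharp_max \<alpha> f x))"
      using A B[of "enn2real (cs s \<mu>)"] by (simp add: Lp_norm_def)
    show "0 \<le> A + B (enn2real (cs s \<mu>))" using A B[of "enn2real (cs s \<mu>)"] by simp
    show "(\<integral>\<^sup>+x. maximal f x \<partial>\<mu>) \<le> ennreal (A * Lp_norm p f + B (enn2real (cs s \<mu>)) * Lp_norm p (\<lambda>x. enn2real (sharp_max \<alpha> f x))
        + (A + B (enn2real (cs s \<mu>))) * \<epsilon>)" if "\<epsilon> > 0" for \<epsilon>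
    proof -
      have eq: "A * (a + \<epsilon>) + b * (c + \<epsilon>) = A * a + b * c + (A + b) * \<epsilon>" for a b c :: real
        by (simp add: algebra_simps)
      have "(\<integral>\<^sup>+x. maximal f x \<partial>\<mu>) \<le> ennreal (A * (Lp_norm p f + \<epsilon>)
          + B (enn2real (cs s \<mu>)) * (Lp_norm p (\<lambda>x. enn2real (sharp_max \<alpha> f x)) + \<epsilon>))"
        using nn_integral_maximal_le_eps[OF p s K \<mu> f that] unfolding A_def B_def n_def V1_def q_def .
      then show ?thesis unfolding eq .
    qed
  qed
  from A B bound show ?thesis by (rule that)
qed

theorem lemma3p14:
  fixes p \<alpha> s :: real
  assumes "1 < p" and "0 < \<alpha>" and "\<alpha> \<le> real DIM('a::euclidean_space) / p"
    and "s > real DIM('a) - \<alpha> * p"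
  shows "\<exists>C :: real \<Rightarrow> real. \<forall>(\<mu> :: 'a measure) (f :: 'a \<Rightarrow> real).
           Ms s \<mu> \<longrightarrow> in_Cp p \<alpha> f \<longrightarrow>
           (\<integral>\<^sup>+ x. maximal f x \<partial>\<mu>) \<le> ennreal (C (enn2real (cs s \<mu>)) * Cp_norm p \<alpha> f)"
proof -
  obtain A B where A: "A \<ge> 0" and B: "\<And>t. t \<ge> 0 \<Longrightarrow> B t \<ge> 0"
    and bound: "\<And>(\<mu> :: 'a measure) f. Ms s \<mu> \<Longrightarrow> in_Cp p \<alpha> f \<Longrightarrow> (\<integral>\<^sup>+x. maximal f x \<partial>\<mu>)
      \<le> ennreal (A * Lp_norm p f + B (enn2real (cs s \<mu>)) * Lp_norm p (\<lambda>x. enn2real (sharp_max \<alpha> f x)))"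
    using nn_integral_maximal_le[OF assms(1,4)] by metis
  have C: "(\<integral>\<^sup>+x. maximal f x \<partial>\<mu>) \<le> ennreal ((A + B (enn2real (cs s \<mu>))) * Cp_norm p \<alpha> f)"
    if "Ms s \<mu>" "in_Cp p \<alpha> f" for \<mu> :: "'a measure" and f
  proof -
    define b where "b = B (enn2real (cs s \<mu>))"
    define Nf where "Nf = Lp_norm p f"
    define Ng where "Ng = Lp_norm p (\<lambda>x. enn2real (sharp_max \<alpha> f x))"
    have "0 \<le> A * Ng + b * Nf" using A B[of "enn2real (cs s \<mu>)"] by (simp add: b_def Nf_def Ng_def Lp_norm_def)
    then have "A * Nf + b * Ng \<le> (A + b) * (Nf + Ng)" by (simp add: algebra_simps)
    then have "ennreal (A * Nf + b * Ng) \<le> ennreal ((A + b) * Cp_norm p \<alpha> f)"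
      unfolding Cp_norm_def Nf_def Ng_def by (rule ennreal_leI)
    with bound[OF that] show ?thesis unfolding b_def Nf_def Ng_def by (rule order_trans)
  qed
  show ?thesis by (intro exI[of _ "\<lambda>t. A + B t"] allI impI C)
qed

end
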